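(* Let $\hat y=K\hat x$ and let $Y_1,Y_2,\dots$ be i.i.d. $\mathcal{Y}$-valued random variables with $\mathbb{E}[Y_1]=\hat y$ and $\mathbb{E}\|Y_1-\hat y\|^2<\infty$. Assume there are $q>0$, $p>1$ with $q>p-1$, $\sigma_j^2\asymp j^{-q}$ and $\mathbb{E}(Y_1-\hat y,u_j)^2\asymp j^{-p}$. Let $\varepsilon>0$ with $p>1+\varepsilon$, set $d_j:=j^{\frac{p-1-\varepsilon}{2}}$, and assume $\hat x\in\mathcal{X}_{\nu,\rho}$ with $\nu,\rho>0$. Define $$\delta_n':=\frac{1}{\sqrt n}\sqrt{\frac{1}{n-1}\sum_{i=1}^n\sum_{j=1}^\infty d_j^2(Y_i-\bar Y_n,u_j)^2},\qquad k_n:=\min\Big\{k\ge0:\ \sqrt{\textstyle\sum_{j=k+1}^\infty d_j^2(\bar Y_n,u_j)^2}\le\delta_n'\Big\}.$$ Let $\nu':=\frac{q}{q+1+\varepsilon-p}\nu$. Then there exists $L>0$ such that $$\mathbb{P}\left(\|\bar X^n_{k_n}-\hat x\|\le L\,\rho^{\frac{1}{1+\nu'}}\left(\frac{1}{\sqrt n}\right)^{\frac{\nu'}{\nu'+1}}\right)\to1\quad (n\to\infty).$$ (Note $\frac{\nu'}{\nu'+1}=\frac{\nu}{\nu+1-\frac{p-1-\varepsilon}{q}}$.)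
   Context: $\mathcal{X},\mathcal{Y}$ are infinite-dimensional real separable Hilbert spaces and $K:\mathcal{X}\to\mathcal{Y}$ is a compact linear operator with dense range, with singular value decomposition $(\sigma_j,u_j,v_j)_{j\in\mathbb{N}}$: $(u_j)$ is an orthonormal basis of $\mathcal{Y}$, $(v_j)$ an orthonormal basis of $\mathcal{N}(K)^\perp$, $(\sigma_j)$ is a nonincreasing sequence of positive numbers converging to $0$, and $Kv_j=\sigma_ju_j$. For $\nu,\rho>0$, $\mathcal{X}_{\nu,\rho}:=\{(K^*K)^{\nu/2}\xi:\xi\in\mathcal{X},\|\xi\|\le\rho\}=\{\sum_j\sigma_j^\nu(\xi,v_j)v_j:\|\xi\|\le\rho\}$. $\bar Y_n:=\frac1n\sum_{i=1}^nY_i$ and $\bar X^n_k:=\sum_{j=1}^k\sigma_j^{-1}(\bar Y_n,u_j)v_j$ (with $\bar X^n_0=0$). $a_j\asymp b_j$ means $cb_j\le a_j\le Cb_j$ for constants $0<c\le C$ independent of $j$. *)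

theory Defs
  imports "HOL-Probability.Probability"
begin

text \<open>Indices j of the singular system start at 1, as in the paper; values at index 0 are irrelevant.\<close>

definition asymp_equiv_pos :: "(nat \<Rightarrow> real) \<Rightarrow> (nat \<Rightarrow> real) \<Rightarrow> bool" where
  "asymp_equiv_pos a b \<longleftrightarrow>
     (\<exists>c C. 0 < c \<and> c \<le> C \<and> (\<forall>j\<ge>1. c * b j \<le> a j \<and> a j \<le> C * b j))"

definition ybar :: "(nat \<Rightarrow> 'a \<Rightarrow> 'y::real_vector) \<Rightarrow> nat \<Rightarrow> 'a \<Rightarrow> 'y" where
  "ybar Y n \<omega> = (1 / real n) *\<^sub>R (\<Sum>i=1..n. Y i \<omega>)"

definition xbar :: "(nat \<Rightarrow> real) \<Rightarrow> (nat \<Rightarrow> 'y::real_inner) \<Rightarrow> (nat \<Rightarrow> 'x::real_vector)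
    \<Rightarrow> 'y \<Rightarrow> nat \<Rightarrow> 'x" where
  "xbar \<sigma> u v y k = (\<Sum>j=1..k. ((y \<bullet> u j) / \<sigma> j) *\<^sub>R v j)"

definition delta' :: "(nat \<Rightarrow> real) \<Rightarrow> (nat \<Rightarrow> 'y::real_inner) \<Rightarrow> (nat \<Rightarrow> 'a \<Rightarrow> 'y)
    \<Rightarrow> nat \<Rightarrow> 'a \<Rightarrow> real" where
  "delta' d u Y n \<omega> = (1 / sqrt (real n)) * sqrt (1 / (real n - 1) *
     (\<Sum>i=1..n. \<Sum>\<^sub>\<infinity>j\<in>{1..}. (d j)\<^sup>2 * ((Y i \<omega> - ybar Y n \<omega>) \<bullet> u j)\<^sup>2))"

definition kstop :: "(nat \<Rightarrow> real) \<Rightarrow> (nat \<Rightarrow> 'y::real_inner) \<Rightarrow> (nat \<Rightarrow> 'a \<Rightarrow> 'y)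
    \<Rightarrow> nat \<Rightarrow> 'a \<Rightarrow> nat" where
  "kstop d u Y n \<omega> = (LEAST k::nat.
     sqrt (\<Sum>\<^sub>\<infinity>j\<in>{k+1..}. (d j)\<^sup>2 * (ybar Y n \<omega> \<bullet> u j)\<^sup>2) \<le> delta' d u Y n \<omega>)"

end

theory Submission
  imports Defs
begin

(* Write (Ybar_n, u_j) = (y_hat, u_j) + N_j with centred noise N_j of variance O(j^-p / n), and
   x_hat = sum_j a_j v_j with a_j = sigma_j^nu (xi, v_j). For every cut-off k the error of the
   truncated SVD estimator is at most the root of the variance term sum_{j<=k} N_j^2 / sigma_j^2
   plus the norm of the bias sum_{j>k} a_j v_j.

   Markov and Chebyshev bounds give an event of probability close to 1 on which the weighted noise
   energies sum_j d_j^2 (Y_i - y_hat, u_j)^2 average O(1), the weighted energy of the mean noise is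
   O(1/n), and the first noise coordinate is not too concentrated. There the discrepancy delta'_n is
   of exact order n^(-1/2), so the stopping index k_n stays below k_0 ~ n^(1/aexp), where the
   weighted signal tail is already small, and beyond k_n the weighted signal is O(1/n). Splitting
   the bias at m ~ n^(1/aexp), this O(1/n) bound controls the low coefficients and the source
   condition the high ones, while the variance term up to k_0 is O(n^(-rate - eps/(2 aexp))).
   Both are below c^2 n^-rate / 4 for any c > 0 once n is large, so the error is o(n^(-rate/2))
   in probability. *)

lemma norm_sum_orthonormal_sq:
  fixes v :: "nat \<Rightarrow> 'x::real_inner"
  assumes on: "\<And>i j. i \<ge> 1 \<Longrightarrow> j \<ge> 1 \<Longrightarrow> v i \<bullet> v j = (if i = j then 1 else 0)"
    and F: "finite F" "F \<subseteq> {1..}"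
  shows "(norm (\<Sum>j\<in>F. c j *\<^sub>R v j))\<^sup>2 = (\<Sum>j\<in>F. (c j)\<^sup>2)"
proof -
  have "(norm (\<Sum>j\<in>F. c j *\<^sub>R v j))\<^sup>2 = (\<Sum>i\<in>F. \<Sum>j\<in>F. c i * (c j * (v j \<bullet> v i)))"
    by (simp add: power2_norm_eq_inner inner_sum_left inner_sum_right sum_distrib_left)
  also have "\<dots> = (\<Sum>i\<in>F. \<Sum>j\<in>F. if i = j then c i * c j else 0)"
    using F by (intro sum.cong refl) (auto simp: on subset_iff)
  also have "\<dots> = (\<Sum>j\<in>F. (c j)\<^sup>2)"
    using F by (simp add: power2_eq_square)
  finally show ?thesis .
qed

lemma norm_sum_orthonormal:
  fixes v :: "nat \<Rightarrow> 'x::real_inner"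
  assumes "\<And>i j. i \<ge> 1 \<Longrightarrow> j \<ge> 1 \<Longrightarrow> v i \<bullet> v j = (if i = j then 1 else 0)"
    and "finite F" "F \<subseteq> {1..}"
  shows "norm (\<Sum>j\<in>F. c j *\<^sub>R v j) = sqrt (\<Sum>j\<in>F. (c j)\<^sup>2)"
  using norm_sum_orthonormal_sq[OF assms, of c] by (metis norm_ge_zero real_sqrt_unique)

lemma bessel_inequality:
  fixes v :: "nat \<Rightarrow> 'x::real_inner"
  assumes on: "\<And>i j. i \<ge> 1 \<Longrightarrow> j \<ge> 1 \<Longrightarrow> v i \<bullet> v j = (if i = j then 1 else 0)"
    and F: "finite F" "F \<subseteq> {1..}"
  shows "(\<Sum>j\<in>F. (\<xi> \<bullet> v j)\<^sup>2) \<le> (norm \<xi>)\<^sup>2"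
proof -
  define P where "P = (\<Sum>j\<in>F. (\<xi> \<bullet> v j) *\<^sub>R v j)"
  have norm_P: "(norm P)\<^sup>2 = (\<Sum>j\<in>F. (\<xi> \<bullet> v j)\<^sup>2)"
    unfolding P_def by (rule norm_sum_orthonormal_sq[OF on F])
  have inner_P: "\<xi> \<bullet> P = (\<Sum>j\<in>F. (\<xi> \<bullet> v j)\<^sup>2)"
    unfolding P_def by (simp add: inner_sum_right power2_eq_square)
  have "0 \<le> (norm (\<xi> - P))\<^sup>2" by simp
  also have "\<dots> = (norm \<xi>)\<^sup>2 - 2 * (\<xi> \<bullet> P) + (norm P)\<^sup>2"
    by (simp add: power2_norm_eq_inner inner_diff_left inner_diff_right inner_commute)
  finally show ?thesis using norm_P inner_P by simp
qed

lemma norm_has_sum_orthonormal_le: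
  fixes v :: "nat \<Rightarrow> 'x::real_inner"
  assumes on: "\<And>i j. i \<ge> 1 \<Longrightarrow> j \<ge> 1 \<Longrightarrow> v i \<bullet> v j = (if i = j then 1 else 0)"
    and S: "S \<subseteq> {1..}"
    and R: "((\<lambda>j. c j *\<^sub>R v j) has_sum R) S"
    and B: "\<And>F. finite F \<Longrightarrow> F \<subseteq> S \<Longrightarrow> (\<Sum>j\<in>F. (c j)\<^sup>2) \<le> B"
  shows "norm R \<le> sqrt B"
proof -
  have "((\<lambda>F. norm (\<Sum>j\<in>F. c j *\<^sub>R v j)) \<longlongrightarrow> norm R) (finite_subsets_at_top S)"
    using R unfolding has_sum_def by (intro tendsto_norm)
  moreover have "\<forall>\<^sub>F F in finite_subsets_at_top S. norm (\<Sum>j\<in>F. c j *\<^sub>R v j) \<le> sqrt B"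
  proof (rule eventually_finite_subsets_at_top_weakI)
    fix F assume F: "finite F" "F \<subseteq> S"
    then have "norm (\<Sum>j\<in>F. c j *\<^sub>R v j) = sqrt (\<Sum>j\<in>F. (c j)\<^sup>2)"
      using S by (intro norm_sum_orthonormal[OF on]) auto
    then show "norm (\<Sum>j\<in>F. c j *\<^sub>R v j) \<le> sqrt B" using B[OF F] by simp
  qed
  ultimately show ?thesis
    by (intro tendsto_upperbound[of _ _ "finite_subsets_at_top S"])
       (auto simp: finite_subsets_at_top_neq_bot)
qed

lemma infsum_nonneg_eq_enn2real_suminf:
  fixes f :: "nat \<Rightarrow> real"
  assumes nonneg: "\<And>j. j \<in> S \<Longrightarrow> 0 \<le> f j"
  shows "infsum f S = enn2real (\<Sum>j. ennreal (if j \<in> S then f j else 0))"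
proof -
  define g where "g j = (if j \<in> S then f j else 0)" for j
  have g_nonneg: "\<And>j. 0 \<le> g j" using nonneg by (auto simp: g_def)
  have "infsum f S = infsum g UNIV" by (rule infsum_cong_neutral) (auto simp: g_def)
  moreover have "infsum g UNIV = enn2real (\<Sum>j. ennreal (g j))"
  proof (cases "summable g")
    case True
    then have "infsum g UNIV = suminf g"
      using sums_nonneg_imp_has_sum g_nonneg summable_sums infsumI by blast
    then show ?thesis
      using g_nonneg True by (simp add: suminf_ennreal2 suminf_nonneg)
  next
    case False
    then have "infsum g UNIV = 0"
      using summable_on_UNIV_nonneg_real_iff g_nonneg infsum_not_exists by blast
    moreover have "(\<Sum>j. ennreal (g j)) = top" using False summable_suminf_not_top g_nonneg by blast
    ultimately show ?thesis by simp
  qed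
  ultimately show ?thesis by (simp add: g_def)
qed

lemma borel_measurable_infsum_nonneg:
  fixes f :: "nat \<Rightarrow> 'a \<Rightarrow> real"
  assumes [measurable]: "\<And>j. f j \<in> borel_measurable M"
    and "\<And>j \<omega>. j \<in> S \<Longrightarrow> 0 \<le> f j \<omega>"
  shows "(\<lambda>\<omega>. infsum (\<lambda>j. f j \<omega>) S) \<in> borel_measurable M"
proof -
  have "(\<lambda>\<omega>. infsum (\<lambda>j. f j \<omega>) S)
      = (\<lambda>\<omega>. enn2real (\<Sum>j. ennreal (if j \<in> S then f j \<omega> else 0)))"
    using assms(2) by (intro ext infsum_nonneg_eq_enn2real_suminf) auto
  also have "\<dots> \<in> borel_measurable M" by measurable
  finally show ?thesis .
qed

lemma infsum_le_of_finite_sums_le: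
  fixes f :: "'b \<Rightarrow> real"
  assumes "\<And>F. finite F \<Longrightarrow> F \<subseteq> S \<Longrightarrow> sum f F \<le> b" "0 \<le> b"
  shows "infsum f S \<le> b"
proof (cases "f summable_on S")
  case True then show ?thesis using assms by (intro infsum_le_finite_sums) auto
next
  case False then show ?thesis using assms by (simp add: infsum_not_exists)
qed

lemma summable_on_of_finite_sums_le:
  fixes f :: "'b \<Rightarrow> real"
  assumes "\<And>F. finite F \<Longrightarrow> F \<subseteq> S \<Longrightarrow> sum f F \<le> b" "\<And>j. j \<in> S \<Longrightarrow> 0 \<le> f j"
  shows "f summable_on S"
  using assms by (intro nonneg_bdd_above_summable_on) (auto simp: bdd_above_def)

lemma sum_le_enn2real_suminf:
  fixes g :: "nat \<Rightarrow> real"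
  assumes g_nonneg: "\<And>j. 0 \<le> g j" and finite_sum: "(\<Sum>j. ennreal (g j)) \<noteq> top"
    and F: "finite F"
  shows "sum g F \<le> enn2real (\<Sum>j. ennreal (g j))"
proof -
  have "ennreal (sum g F) = (\<Sum>j\<in>F. ennreal (g j))" using g_nonneg by (simp add: sum_ennreal)
  also have "\<dots> \<le> (\<Sum>j. ennreal (g j))" by (rule sum_le_suminf) (auto simp: F)
  finally have "enn2real (ennreal (sum g F)) \<le> enn2real (\<Sum>j. ennreal (g j))"
    using finite_sum by (intro enn2real_mono) (auto simp: top.not_eq_extremum)
  then show ?thesis using g_nonneg by (simp add: sum_nonneg)
qed

lemma suminf_tail_tendsto_0:
  fixes g :: "nat \<Rightarrow> real"
  assumes g: "summable g"
  shows "(\<lambda>N. \<Sum>j. if N < j then g j else 0) \<longlonglongrightarrow> 0"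
proof -
  have "(\<Sum>j. if N < j then g j else 0) = suminf g - (\<Sum>j<Suc N. g j)" for N
  proof -
    have "(\<lambda>j. if N < j then g j else 0) = (\<lambda>j. g j - (if j < Suc N then g j else 0))" by auto
    moreover have "summable (\<lambda>j. if j < Suc N then g j else 0)"
      by (rule summable_finite[of "{..<Suc N}"]) auto
    ultimately have "(\<Sum>j. if N < j then g j else 0) = suminf g - (\<Sum>j. if j < Suc N then g j else 0)"
      using suminf_diff[OF g] by simp
    also have "(\<Sum>j. if j < Suc N then g j else 0) = (\<Sum>j<Suc N. g j)"
      by (subst suminf_finite[of "{..<Suc N}"]) auto
    finally show ?thesis .
  qed
  moreover have "(\<lambda>N. suminf g - (\<Sum>j<Suc N. g j)) \<longlonglongrightarrow> suminf g - suminf g"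
    using LIMSEQ_Suc[OF summable_LIMSEQ[OF g]] by (intro tendsto_diff tendsto_const)
  ultimately show ?thesis by simp
qed

lemma sum_le_suminf_tail:
  fixes g :: "nat \<Rightarrow> real"
  assumes g_nonneg: "\<And>j. 0 \<le> g j" and g: "summable g"
    and F: "finite F" "\<And>j. j \<in> F \<Longrightarrow> N < j"
  shows "sum g F \<le> (\<Sum>j. if N < j then g j else 0)"
proof -
  have tail: "summable (\<lambda>j. if N < j then g j else 0)"
    by (rule summable_comparison_test'[OF g]) (auto simp: g_nonneg)
  have "sum g F = sum (\<lambda>j. if N < j then g j else 0) F" using F by (intro sum.cong) auto
  also have "\<dots> \<le> (\<Sum>j. if N < j then g j else 0)"
    by (rule sum_le_suminf[OF tail F(1)]) (auto simp: g_nonneg)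
  finally show ?thesis .
qed

lemma sum_square_deviation:
  fixes z :: "nat \<Rightarrow> real"
  assumes n: "n \<ge> 1"
  shows "(\<Sum>i=1..n. (z i - (1 / real n) * (\<Sum>l=1..n. z l))\<^sup>2)
         = (\<Sum>i=1..n. (z i)\<^sup>2) - real n * ((1 / real n) * (\<Sum>l=1..n. z l))\<^sup>2"
proof -
  define m where "m = (1 / real n) * (\<Sum>l=1..n. z l)"
  have sum_z: "(\<Sum>l=1..n. z l) = real n * m" using n by (auto simp: m_def field_simps)
  have "(\<Sum>i=1..n. (z i - m)\<^sup>2) = (\<Sum>i=1..n. (z i)\<^sup>2 - 2 * m * z i + m\<^sup>2)"
    by (intro sum.cong refl) (simp add: power2_eq_square algebra_simps)
  also have "\<dots> = (\<Sum>i=1..n. (z i)\<^sup>2) - 2 * m * (\<Sum>i=1..n. z i) + real n * m\<^sup>2"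
    by (simp add: sum.distrib sum_subtractf sum_distrib_left)
  also have "\<dots> = (\<Sum>i=1..n. (z i)\<^sup>2) - real n * m\<^sup>2"
    unfolding sum_z by (simp add: power2_eq_square algebra_simps)
  finally show ?thesis by (simp add: m_def)
qed

lemma square_diff_le: "((x::real) - y)\<^sup>2 \<le> 2 * x\<^sup>2 + 2 * y\<^sup>2"
  using zero_le_power2[of "x + y"] by (simp add: power2_eq_square algebra_simps)

lemma square_add_le: "((x::real) + y)\<^sup>2 \<le> 2 * x\<^sup>2 + 2 * y\<^sup>2"
  using square_diff_le[of x "-y"] by simp

lemma prob_ennreal_ge_le:
  fixes X :: "'a \<Rightarrow> ennreal"
  assumes P: "prob_space M" and [measurable]: "X \<in> borel_measurable M" and c: "0 < c"
    and I: "(\<integral>\<^sup>+\<omega>. X \<omega> \<partial>M) \<le> ennreal B" and B: "0 \<le> B"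
  shows "measure M {\<omega>\<in>space M. ennreal c \<le> X \<omega>} \<le> B / c"
proof -
  interpret prob_space M by (rule P)
  define S where "S = {\<omega>\<in>space M. ennreal c \<le> X \<omega>}"
  have S[measurable]: "S \<in> sets M" unfolding S_def by measurable
  have "ennreal c * emeasure M S = (\<integral>\<^sup>+\<omega>. ennreal c * indicator S \<omega> \<partial>M)"
    by (simp add: nn_integral_cmult_indicator)
  also have "\<dots> \<le> (\<integral>\<^sup>+\<omega>. X \<omega> \<partial>M)"
    by (intro nn_integral_mono) (auto simp: S_def indicator_def)
  also have "\<dots> \<le> ennreal B" by (rule I)
  finally have "ennreal c * ennreal (measure M S) \<le> ennreal B"
    by (simp add: emeasure_eq_measure)
  then have "ennreal (c * measure M S) \<le> ennreal B" using c by (simp add: ennreal_mult)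
  then have "c * measure M S \<le> B" using B by (simp add: ennreal_le_iff)
  then show ?thesis using c unfolding S_def by (simp add: field_simps)
qed

lemma eventually_le_const_mult_powr:
  fixes c a :: real
  assumes c: "c > 0" and a: "a > 0"
  shows "eventually (\<lambda>n. Z \<le> c * real n powr a) sequentially"
proof -
  define N where "N = nat \<lceil>(max Z 1 / c) powr (1 / a)\<rceil>"
  show ?thesis unfolding eventually_sequentially
  proof (intro exI allI impI)
    fix n assume n: "N \<le> n"
    have "(max Z 1 / c) powr (1 / a) \<le> real n" using n unfolding N_def by linarith
    then have "((max Z 1 / c) powr (1 / a)) powr a \<le> real n powr a" using a by (intro powr_mono2) auto
    then have "max Z 1 \<le> c * real n powr a" using c a by (simp add: powr_powr field_simps)
    then show "Z \<le> c * real n powr a" by linarith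
  qed
qed

lemma filterlim_nat_ceiling_const_mult_powr:
  fixes c a :: real
  assumes "c > 0" "a > 0"
  shows "filterlim (\<lambda>n. nat \<lceil>c * real n powr a\<rceil>) at_top sequentially"
  unfolding filterlim_at_top
proof
  fix Z :: nat
  show "eventually (\<lambda>n. Z \<le> nat \<lceil>c * real n powr a\<rceil>) sequentially"
    using eventually_le_const_mult_powr[OF assms, of "real Z"] by eventually_elim linarith
qed

lemma filterlim_nat_floor_const_mult_powr:
  fixes c a :: real
  assumes "c > 0" "a > 0"
  shows "filterlim (\<lambda>n. nat \<lfloor>c * real n powr a\<rfloor>) at_top sequentially"
  unfolding filterlim_at_top
proof
  fix Z :: nat
  show "eventually (\<lambda>n. Z \<le> nat \<lfloor>c * real n powr a\<rfloor>) sequentially"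
    using eventually_le_const_mult_powr[OF assms, of "real Z + 1"] by eventually_elim linarith
qed

lemma powr_scaled_root_div:
  fixes lam a b :: real
  assumes n: "n \<ge> 1" and lam: "lam > 0"
  shows "(lam * real n powr (1 / a)) powr b / real n = lam powr b * real n powr (- (1 - b / a))"
  using n lam by (simp add: powr_mult powr_powr powr_diff powr_minus field_simps)

lemma powr_scaled_root:
  fixes lam a s :: real
  assumes "n \<ge> 1" "lam > 0"
  shows "(lam * real n powr (1 / a)) powr s = lam powr s * real n powr (s / a)"
  using assms by (simp add: powr_mult powr_powr)

lemma inverse_sqrt_powr_eq:
  fixes c t :: real
  assumes n: "n \<ge> 1" and c: "c > 0"
  shows "c * (1 / sqrt (real n)) powr t = 2 * sqrt (c\<^sup>2 * real n powr (- t) / 4)"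
proof -
  have n': "real n > 0" using n by simp
  have "(1 / sqrt (real n)) powr t = real n powr (- t / 2)"
    using n' by (simp add: powr_half_sqrt[symmetric] powr_divide powr_powr powr_minus_divide)
  moreover have "c\<^sup>2 * real n powr (- t) / 4 = (c / 2 * real n powr (- t / 2))\<^sup>2"
    using n' by (simp add: power2_eq_square powr_add[symmetric] field_simps)
  ultimately show ?thesis using c n' by simp
qed

lemma nat_ceiling_root_bounds:
  fixes K a :: real
  assumes a: "a > 0" and large: "1 \<le> K * real n powr (1 / a)"
  shows "nat \<lceil>K * real n powr (1 / a)\<rceil> \<ge> 1"
    and "real (nat \<lceil>K * real n powr (1 / a)\<rceil>) \<le> 2 * K * real n powr (1 / a)"
    and "K powr a * real n \<le> real (nat \<lceil>K * real n powr (1 / a)\<rceil>) powr a"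
proof -
  have n: "real n > 0" using large by (cases "n = 0") auto
  have K: "K > 0"
  proof (rule ccontr)
    assume "\<not> K > 0"
    then have "K * real n powr (1 / a) \<le> 0" by (simp add: mult_nonpos_nonneg)
    then show False using large by simp
  qed
  show "nat \<lceil>K * real n powr (1 / a)\<rceil> \<ge> 1" "real (nat \<lceil>K * real n powr (1 / a)\<rceil>) \<le> 2 * K * real n powr (1 / a)"
    using large by linarith+
  have "K powr a * real n = (K * real n powr (1 / a)) powr a"
    using K n a by (simp add: powr_mult powr_powr)
  also have "\<dots> \<le> real (nat \<lceil>K * real n powr (1 / a)\<rceil>) powr a"
    using K n a by (intro powr_mono2) auto
  finally show "K powr a * real n \<le> real (nat \<lceil>K * real n powr (1 / a)\<rceil>) powr a" .
qed


text \<open>\<open>\<xi>\<close> is the source element, \<open>x_hat = (K\<^sup>*K)\<^bsup>\<nu>/2\<^esup> \<xi>\<close>, and \<open>c1, C1\<close> and \<open>c2, C2\<close> are the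
  constants of the two \<open>asymp_equiv_pos\<close> hypotheses.\<close>

locale discrepancy_setting =
  fixes K :: "'x::{real_inner, banach, second_countable_topology} \<Rightarrow> 'y::{real_inner, banach, second_countable_topology}"
    and \<sigma> :: "nat \<Rightarrow> real" and u :: "nat \<Rightarrow> 'y" and v :: "nat \<Rightarrow> 'x"
    and M :: "'a measure" and Y :: "nat \<Rightarrow> 'a \<Rightarrow> 'y"
    and x_hat :: 'x and y_hat :: 'y
    and q p \<epsilon> \<nu> :: real and \<xi> :: 'x and c1 C1 c2 C2 :: real
  assumes K_lin: "bounded_linear K"
    and u_on: "\<And>i j. i \<ge> 1 \<Longrightarrow> j \<ge> 1 \<Longrightarrow> u i \<bullet> u j = (if i = j then 1 else 0)"
    and v_on: "\<And>i j. i \<ge> 1 \<Longrightarrow> j \<ge> 1 \<Longrightarrow> v i \<bullet> v j = (if i = j then 1 else 0)"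
    and \<sigma>_pos: "\<And>j. j \<ge> 1 \<Longrightarrow> \<sigma> j > 0"
    and svd: "\<And>j. j \<ge> 1 \<Longrightarrow> K (v j) = \<sigma> j *\<^sub>R u j"
    and y_hat: "y_hat = K x_hat"
    and M: "prob_space M"
    and Y_rv: "\<And>i. i \<ge> 1 \<Longrightarrow> Y i \<in> borel_measurable M"
    and Y_indep: "prob_space.indep_vars M (\<lambda>_. borel) Y {1..}"
    and Y_id: "\<And>i. i \<ge> 1 \<Longrightarrow> distr M borel (Y i) = distr M borel (Y 1)"
    and Y_int: "integrable M (Y 1)"
    and Y_mean: "prob_space.expectation M (Y 1) = y_hat"
    and Y_var: "integrable M (\<lambda>\<omega>. (norm (Y 1 \<omega> - y_hat))\<^sup>2)"
    and qp: "q > 0" "p > 1" "q > p - 1"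
    and \<epsilon>: "\<epsilon> > 0" "p > 1 + \<epsilon>"
    and \<nu>: "\<nu> > 0"
    and source: "((\<lambda>j. (\<sigma> j powr \<nu> * (\<xi> \<bullet> v j)) *\<^sub>R v j) has_sum x_hat) {1..}"
    and \<sigma>_rate: "0 < c1" "\<And>j. j \<ge> 1 \<Longrightarrow> c1 * real j powr (- q) \<le> (\<sigma> j)\<^sup>2 \<and> (\<sigma> j)\<^sup>2 \<le> C1 * real j powr (- q)"
    and noise_rate: "0 < c2" "\<And>j. j \<ge> 1 \<Longrightarrow>
       c2 * real j powr (- p) \<le> prob_space.expectation M (\<lambda>\<omega>. ((Y 1 \<omega> - y_hat) \<bullet> u j)\<^sup>2) \<and>
       prob_space.expectation M (\<lambda>\<omega>. ((Y 1 \<omega> - y_hat) \<bullet> u j)\<^sup>2) \<le> C2 * real j powr (- p)"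

sublocale discrepancy_setting \<subseteq> prob_space M by (rule M)

context discrepancy_setting
begin

lemma Y_measurable[measurable]: "i \<ge> 1 \<Longrightarrow> Y i \<in> borel_measurable M"
  by (rule Y_rv)

lemma integrable_comp_Y_iff:
  fixes g :: "'y \<Rightarrow> real"
  assumes i: "i \<ge> 1" and [measurable]: "g \<in> borel_measurable borel"
  shows "integrable M (\<lambda>\<omega>. g (Y i \<omega>)) \<longleftrightarrow> integrable M (\<lambda>\<omega>. g (Y 1 \<omega>))"
  using integrable_distr_eq[of "Y i" M borel g] integrable_distr_eq[of "Y 1" M borel g] Y_id[OF i] i
  by simp

lemma integral_comp_Y:
  fixes g :: "'y \<Rightarrow> real"
  assumes i: "i \<ge> 1" and [measurable]: "g \<in> borel_measurable borel"
  shows "(\<integral>\<omega>. g (Y i \<omega>) \<partial>M) = (\<integral>\<omega>. g (Y 1 \<omega>) \<partial>M)"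
  using integral_distr[of "Y i" M borel g] integral_distr[of "Y 1" M borel g] Y_id[OF i] i
  by simp

lemma indep_comp_Y_mult:
  fixes g h :: "'y \<Rightarrow> real"
  assumes il: "i \<ge> 1" "l \<ge> 1" "i \<noteq> l"
    and [measurable]: "g \<in> borel_measurable borel" "h \<in> borel_measurable borel"
    and ig: "integrable M (\<lambda>\<omega>. g (Y i \<omega>))" and ih: "integrable M (\<lambda>\<omega>. h (Y l \<omega>))"
  shows "integrable M (\<lambda>\<omega>. g (Y i \<omega>) * h (Y l \<omega>))"
    and "(\<integral>\<omega>. g (Y i \<omega>) * h (Y l \<omega>) \<partial>M) = (\<integral>\<omega>. g (Y i \<omega>) \<partial>M) * (\<integral>\<omega>. h (Y l \<omega>) \<partial>M)"
proof -
  define G where "G k = (if k = i then g else h)" for k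
  have "indep_vars (\<lambda>_. borel) Y {i, l}"
    by (rule indep_vars_subset[OF Y_indep]) (use il in auto)
  then have indep: "indep_vars (\<lambda>_. borel) (\<lambda>k \<omega>. G k (Y k \<omega>)) {i, l}"
    by (rule indep_vars_compose2) (auto simp: G_def)
  have ints: "\<And>k. k \<in> {i, l} \<Longrightarrow> integrable M (\<lambda>\<omega>. G k (Y k \<omega>))"
    using ig ih il by (auto simp: G_def)
  have prod: "\<And>\<omega>. (\<Prod>k\<in>{i, l}. G k (Y k \<omega>)) = g (Y i \<omega>) * h (Y l \<omega>)"
    using il by (simp add: G_def)
  show "integrable M (\<lambda>\<omega>. g (Y i \<omega>) * h (Y l \<omega>))"
    using indep_vars_integrable[OF _ indep ints] prod by simp
  show "(\<integral>\<omega>. g (Y i \<omega>) * h (Y l \<omega>) \<partial>M) = (\<integral>\<omega>. g (Y i \<omega>) \<partial>M) * (\<integral>\<omega>. h (Y l \<omega>) \<partial>M)"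
    using indep_vars_lebesgue_integral[OF _ indep ints] prod il by (simp add: G_def)
qed

lemma second_moment_sum_centered:
  fixes g :: "'y \<Rightarrow> real"
  assumes g[measurable]: "g \<in> borel_measurable borel"
    and ig: "integrable M (\<lambda>\<omega>. g (Y 1 \<omega>))" and ig2: "integrable M (\<lambda>\<omega>. (g (Y 1 \<omega>))\<^sup>2)"
    and centered: "(\<integral>\<omega>. g (Y 1 \<omega>) \<partial>M) = 0"
  shows "integrable M (\<lambda>\<omega>. (\<Sum>i=1..n. g (Y i \<omega>))\<^sup>2)"
    and "(\<integral>\<omega>. (\<Sum>i=1..n. g (Y i \<omega>))\<^sup>2 \<partial>M) = real n * (\<integral>\<omega>. (g (Y 1 \<omega>))\<^sup>2 \<partial>M)"
proof -
  have g2[measurable]: "(\<lambda>y. (g y)\<^sup>2) \<in> borel_measurable borel" by measurable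
  have gi: "integrable M (\<lambda>\<omega>. g (Y i \<omega>))" if "i \<ge> 1" for i
    using integrable_comp_Y_iff[OF that g] ig by blast
  have expand: "\<And>\<omega>. (\<Sum>i=1..n. g (Y i \<omega>))\<^sup>2 = (\<Sum>i=1..n. \<Sum>l=1..n. g (Y i \<omega>) * g (Y l \<omega>))"
    by (simp add: power2_eq_square sum_product)
  have term_int: "integrable M (\<lambda>\<omega>. g (Y i \<omega>) * g (Y l \<omega>))"
    if "i \<in> {1..n}" "l \<in> {1..n}" for i l
  proof (cases "i = l")
    case True then show ?thesis
      using integrable_comp_Y_iff[OF _ g2, of i] ig2 that by (simp add: power2_eq_square)
  next
    case False then show ?thesis using indep_comp_Y_mult(1)[OF _ _ False g g gi gi] that by auto
  qed
  have term_integral: "(\<integral>\<omega>. g (Y i \<omega>) * g (Y l \<omega>) \<partial>M)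
      = (if i = l then (\<integral>\<omega>. (g (Y 1 \<omega>))\<^sup>2 \<partial>M) else 0)"
    if "i \<in> {1..n}" "l \<in> {1..n}" for i l
  proof (cases "i = l")
    case True then show ?thesis
      using integral_comp_Y[OF _ g2, of i] that by (simp add: power2_eq_square)
  next
    case False
    have "(\<integral>\<omega>. g (Y i \<omega>) \<partial>M) = 0" "(\<integral>\<omega>. g (Y l \<omega>) \<partial>M) = 0"
      using integral_comp_Y[OF _ g, of i] integral_comp_Y[OF _ g, of l] centered that by auto
    then show ?thesis using indep_comp_Y_mult(2)[OF _ _ False g g gi gi] False that by auto
  qed
  show "integrable M (\<lambda>\<omega>. (\<Sum>i=1..n. g (Y i \<omega>))\<^sup>2)"
    unfolding expand using term_int by (intro Bochner_Integration.integrable_sum) auto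
  have "(\<integral>\<omega>. (\<Sum>i=1..n. g (Y i \<omega>))\<^sup>2 \<partial>M)
      = (\<Sum>i=1..n. \<Sum>l=1..n. (\<integral>\<omega>. g (Y i \<omega>) * g (Y l \<omega>) \<partial>M))"
    unfolding expand using term_int
    by (subst Bochner_Integration.integral_sum)
       (auto intro!: sum.cong Bochner_Integration.integral_sum Bochner_Integration.integrable_sum)
  also have "\<dots> = (\<Sum>i=1..n. \<Sum>l=1..n. if i = l then (\<integral>\<omega>. (g (Y 1 \<omega>))\<^sup>2 \<partial>M) else 0)"
    using term_integral by (intro sum.cong refl) auto
  also have "\<dots> = real n * (\<integral>\<omega>. (g (Y 1 \<omega>))\<^sup>2 \<partial>M)" by simp
  finally show "(\<integral>\<omega>. (\<Sum>i=1..n. g (Y i \<omega>))\<^sup>2 \<partial>M) = real n * (\<integral>\<omega>. (g (Y 1 \<omega>))\<^sup>2 \<partial>M)" .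
qed

definition noise :: "nat \<Rightarrow> nat \<Rightarrow> 'a \<Rightarrow> real" where
  "noise i j \<omega> = (Y i \<omega> - y_hat) \<bullet> u j"

definition noise_mean :: "nat \<Rightarrow> nat \<Rightarrow> 'a \<Rightarrow> real" where
  "noise_mean n j \<omega> = (1 / real n) * (\<Sum>i=1..n. noise i j \<omega>)"

definition noise_var :: "nat \<Rightarrow> real" where
  "noise_var j = expectation (\<lambda>\<omega>. (noise 1 j \<omega>)\<^sup>2)"

lemma noise_coordinate_measurable[measurable]: "(\<lambda>y. (y - y_hat) \<bullet> u j) \<in> borel_measurable borel"
  by measurable

lemma noise_measurable[measurable]: "i \<ge> 1 \<Longrightarrow> noise i j \<in> borel_measurable M"
  unfolding noise_def[abs_def] by measurable

lemma noise_mean_measurable[measurable]: "noise_mean n j \<in> borel_measurable M"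
  unfolding noise_mean_def[abs_def] by measurable

lemma noise_var_nonneg: "0 \<le> noise_var j"
  unfolding noise_var_def by simp

lemma noise_var_eq: "noise_var j = expectation (\<lambda>\<omega>. ((Y 1 \<omega> - y_hat) \<bullet> u j)\<^sup>2)"
  by (simp add: noise_var_def noise_def)

lemma noise_1_integrable: "j \<ge> 1 \<Longrightarrow> integrable M (\<lambda>\<omega>. (Y 1 \<omega> - y_hat) \<bullet> u j)"
  using Y_int by (intro integrable_inner_left Bochner_Integration.integrable_diff) auto

lemma noise_1_sq_integrable: "j \<ge> 1 \<Longrightarrow> integrable M (\<lambda>\<omega>. ((Y 1 \<omega> - y_hat) \<bullet> u j)\<^sup>2)"
proof (rule Bochner_Integration.integrable_bound[OF Y_var])
  assume j: "j \<ge> 1"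
  have "norm (u j) = 1" using u_on[OF j j] by (simp add: norm_eq_sqrt_inner)
  then have "\<bar>(y - y_hat) \<bullet> u j\<bar> \<le> norm (y - y_hat)" for y
    using Cauchy_Schwarz_ineq2[of "y - y_hat" "u j"] by simp
  then have "((y - y_hat) \<bullet> u j)\<^sup>2 \<le> (norm (y - y_hat))\<^sup>2" for y
    by (metis abs_le_square_iff abs_norm_cancel)
  then show "AE \<omega> in M. norm (((Y 1 \<omega> - y_hat) \<bullet> u j)\<^sup>2) \<le> norm ((norm (Y 1 \<omega> - y_hat))\<^sup>2)"
    by (intro AE_I2) simp
qed measurable

lemma noise_1_centered: "j \<ge> 1 \<Longrightarrow> expectation (\<lambda>\<omega>. (Y 1 \<omega> - y_hat) \<bullet> u j) = 0"
  using Y_int Y_mean by (simp add: prob_space Bochner_Integration.integral_diff)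

lemma noise_sq_integrable:
  assumes "i \<ge> 1" "j \<ge> 1"
  shows "integrable M (\<lambda>\<omega>. (noise i j \<omega>)\<^sup>2)"
  using integrable_comp_Y_iff[of i "\<lambda>y. ((y - y_hat) \<bullet> u j)\<^sup>2"] noise_1_sq_integrable assms
  by (simp add: noise_def)

lemma noise_sq_expectation:
  assumes "i \<ge> 1"
  shows "expectation (\<lambda>\<omega>. (noise i j \<omega>)\<^sup>2) = noise_var j"
  using integral_comp_Y[of i "\<lambda>y. ((y - y_hat) \<bullet> u j)\<^sup>2"] assms by (simp add: noise_def noise_var_eq)

lemma noise_mean_sq:
  assumes n: "n \<ge> 1" and j: "j \<ge> 1"
  shows "integrable M (\<lambda>\<omega>. (noise_mean n j \<omega>)\<^sup>2)"
    and "expectation (\<lambda>\<omega>. (noise_mean n j \<omega>)\<^sup>2) = noise_var j / real n"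
proof -
  note moment = second_moment_sum_centered[OF noise_coordinate_measurable noise_1_integrable[OF j]
      noise_1_sq_integrable[OF j] noise_1_centered[OF j], of n]
  have eq: "(\<lambda>\<omega>. (noise_mean n j \<omega>)\<^sup>2)
      = (\<lambda>\<omega>. (1 / real n)\<^sup>2 * (\<Sum>i=1..n. (Y i \<omega> - y_hat) \<bullet> u j)\<^sup>2)"
    by (simp add: noise_mean_def noise_def power_divide)
  show "integrable M (\<lambda>\<omega>. (noise_mean n j \<omega>)\<^sup>2)" unfolding eq using moment(1) by simp
  show "expectation (\<lambda>\<omega>. (noise_mean n j \<omega>)\<^sup>2) = noise_var j / real n"
    unfolding eq using moment(2) n by (simp add: noise_var_eq power2_eq_square field_simps)
qed

lemma ybar_inner_u: "n \<ge> 1 \<Longrightarrow> ybar Y n \<omega> \<bullet> u j = y_hat \<bullet> u j + noise_mean n j \<omega>"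
  by (simp add: ybar_def noise_mean_def noise_def inner_sum_left inner_diff_left sum_subtractf
      field_simps)

lemma resid_inner_u: "n \<ge> 1 \<Longrightarrow> (Y i \<omega> - ybar Y n \<omega>) \<bullet> u j = noise i j \<omega> - noise_mean n j \<omega>"
  using ybar_inner_u[of n \<omega> j] by (simp add: noise_def inner_diff_left)

definition weight :: "nat \<Rightarrow> real" where "weight j = real j powr ((p - 1 - \<epsilon>) / 2)"

definition xhat_coef :: "nat \<Rightarrow> real" where "xhat_coef j = \<sigma> j powr \<nu> * (\<xi> \<bullet> v j)"

lemma weight_sq: "(weight j)\<^sup>2 = real j powr (p - 1 - \<epsilon>)"
  unfolding weight_def power2_eq_square by (simp add: powr_add[symmetric])

lemma weight_0 [simp]: "weight 0 = 0" and weight_Suc_0 [simp]: "weight (Suc 0) = 1"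
  by (simp_all add: weight_def)

lemma xhat_has_sum: "((\<lambda>j. xhat_coef j *\<^sub>R v j) has_sum x_hat) {1..}"
  using source by (simp add: xhat_coef_def)

lemma y_hat_inner_u: assumes j: "j \<ge> 1" shows "y_hat \<bullet> u j = \<sigma> j * xhat_coef j"
proof -
  have "bounded_linear (\<lambda>x. K x \<bullet> u j)"
    by (rule bounded_linear_compose[OF bounded_linear_inner_left K_lin])
  then have "((\<lambda>i. K (xhat_coef i *\<^sub>R v i) \<bullet> u j) has_sum (K x_hat \<bullet> u j)) {1..}"
    by (rule has_sum_bounded_linear[OF _ xhat_has_sum])
  moreover have "K (xhat_coef i *\<^sub>R v i) \<bullet> u j = (if i = j then \<sigma> j * xhat_coef j else 0)"
    if "i \<in> {1..}" for i
    using that j svd[of i] u_on[of i j] K_lin by (auto simp: linear_simps)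
  ultimately have "((\<lambda>i. if i = j then \<sigma> j * xhat_coef j else 0) has_sum (K x_hat \<bullet> u j)) {1..}"
    by (subst (asm) has_sum_cong[where g="\<lambda>i. if i = j then \<sigma> j * xhat_coef j else 0"]) auto
  moreover have "((\<lambda>i. if i = j then \<sigma> j * xhat_coef j else 0) has_sum (\<sigma> j * xhat_coef j)) {1..}"
    using j by (subst has_sum_cong_neutral[where T="{j}"]) (auto intro: has_sum_finiteI)
  ultimately show ?thesis using has_sum_unique y_hat by blast
qed

lemma error_le_variance_plus_bias:
  assumes n: "n \<ge> 1"
    and B: "\<And>F. finite F \<Longrightarrow> F \<subseteq> {k+1..} \<Longrightarrow> (\<Sum>j\<in>F. (xhat_coef j)\<^sup>2) \<le> B"
  shows "norm (xbar \<sigma> u v (ybar Y n \<omega>) k - x_hat)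
           \<le> sqrt (\<Sum>j=1..k. (noise_mean n j \<omega> / \<sigma> j)\<^sup>2) + sqrt B"
proof -
  define f where "f j = xhat_coef j *\<^sub>R v j" for j
  define R where "R = infsum f {k+1..}"
  have R: "(f has_sum R) {k+1..}"
    unfolding R_def f_def using xhat_has_sum
    by (intro has_sum_infsum summable_on_subset_banach[OF has_sum_imp_summable]) auto
  have "(f has_sum ((\<Sum>j=1..k. f j) + R)) ({1..k} \<union> {k+1..})"
    by (rule has_sum_Un_disjoint[OF has_sum_finite R]) auto
  moreover have "{1..k} \<union> {k+1..} = {1::nat..}" by auto
  ultimately have x_hat_split: "x_hat = (\<Sum>j=1..k. f j) + R"
    using xhat_has_sum has_sum_unique unfolding f_def by metis
  have "xbar \<sigma> u v (ybar Y n \<omega>) k = (\<Sum>j=1..k. (xhat_coef j + noise_mean n j \<omega> / \<sigma> j) *\<^sub>R v j)"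
    unfolding xbar_def
  proof (intro sum.cong refl)
    fix j assume "j \<in> {1..k}"
    then have "j \<ge> 1" by simp
    then have "ybar Y n \<omega> \<bullet> u j / \<sigma> j = xhat_coef j + noise_mean n j \<omega> / \<sigma> j"
      using ybar_inner_u[OF n] y_hat_inner_u \<sigma>_pos[of j] by (simp add: field_simps)
    then show "(ybar Y n \<omega> \<bullet> u j / \<sigma> j) *\<^sub>R v j = (xhat_coef j + noise_mean n j \<omega> / \<sigma> j) *\<^sub>R v j"
      by simp
  qed
  then have "xbar \<sigma> u v (ybar Y n \<omega>) k - x_hat = (\<Sum>j=1..k. (noise_mean n j \<omega> / \<sigma> j) *\<^sub>R v j) - R"
    by (simp add: x_hat_split f_def scaleR_add_left sum.distrib)
  also have "norm \<dots> \<le> norm (\<Sum>j=1..k. (noise_mean n j \<omega> / \<sigma> j) *\<^sub>R v j) + norm R"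
    by (rule norm_triangle_ineq4)
  also have "norm (\<Sum>j=1..k. (noise_mean n j \<omega> / \<sigma> j) *\<^sub>R v j)
      = sqrt (\<Sum>j=1..k. (noise_mean n j \<omega> / \<sigma> j)\<^sup>2)"
    by (rule norm_sum_orthonormal[OF v_on]) auto
  also have "norm R \<le> sqrt B"
    by (rule norm_has_sum_orthonormal_le[OF v_on _ R[unfolded f_def] B]) auto
  finally show ?thesis by simp
qed

text \<open>With \<open>\<nu>' = q \<nu> / bexp\<close> as in the paper, the exponent \<open>\<nu>' / (\<nu>' + 1)\<close> is \<open>rate\<close>
  (lemma \<open>rate_eq_nu'\<close>); the stopping index grows like \<open>n powr (1 / aexp)\<close>.\<close>

definition bexp :: real where "bexp = q + 1 + \<epsilon> - p"
definition aexp :: real where "aexp = q * \<nu> + bexp"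
definition rate :: real where "rate = q * \<nu> / aexp"

lemma bexp_pos: "bexp > 0" using qp \<epsilon> by (simp add: bexp_def)

lemma aexp_pos: "aexp > 0"
  using bexp_pos qp \<nu> by (simp add: aexp_def add_pos_pos)

lemma rate_eq: "rate = 1 - bexp / aexp"
  using aexp_pos by (simp add: rate_def aexp_def field_simps)

lemma rate_eq_nu': "(q / bexp * \<nu>) / (q / bexp * \<nu> + 1) = rate"
proof -
  have "q / bexp * \<nu> + 1 = aexp / bexp" using bexp_pos by (simp add: aexp_def field_simps)
  then show ?thesis using bexp_pos aexp_pos by (simp add: rate_def)
qed

lemma C1_pos: "C1 > 0"
proof -
  have "0 < (\<sigma> 1)\<^sup>2" using \<sigma>_pos[of 1] by simp
  also have "\<dots> \<le> C1" using \<sigma>_rate(2)[of 1] by simp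
  finally show ?thesis .
qed

lemma C2_pos: "C2 > 0"
  using noise_rate(1) noise_rate(2)[of 1] by simp

definition signal_energy :: "nat \<Rightarrow> real" where
  "signal_energy j = (weight j)\<^sup>2 * (y_hat \<bullet> u j)\<^sup>2"

lemma xhat_coef_sq_le: assumes j: "j \<ge> 1"
  shows "(xhat_coef j)\<^sup>2 \<le> C1 powr \<nu> * real j powr (- q * \<nu>) * (\<xi> \<bullet> v j)\<^sup>2"
proof -
  have "(xhat_coef j)\<^sup>2 = ((\<sigma> j)\<^sup>2) powr \<nu> * (\<xi> \<bullet> v j)\<^sup>2"
    using \<sigma>_pos[OF j] by (simp add: xhat_coef_def power_mult_distrib power2_eq_square powr_mult)
  also have "((\<sigma> j)\<^sup>2) powr \<nu> \<le> (C1 * real j powr (- q)) powr \<nu>"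
    using \<sigma>_rate(2)[OF j] \<nu> by (intro powr_mono2) auto
  also have "(C1 * real j powr (- q)) powr \<nu> = C1 powr \<nu> * real j powr (- q * \<nu>)"
    using C1_pos by (simp add: powr_mult powr_powr)
  finally show ?thesis by (simp add: mult_right_mono)
qed

lemma signal_energy_eq: assumes "j \<ge> 1"
  shows "signal_energy j = real j powr (p - 1 - \<epsilon>) * (\<sigma> j)\<^sup>2 * (xhat_coef j)\<^sup>2"
  using assms by (simp add: signal_energy_def weight_sq y_hat_inner_u power_mult_distrib)

lemma signal_energy_le: assumes j: "j \<ge> 1"
  shows "signal_energy j \<le> C1 powr (1 + \<nu>) * real j powr (- aexp) * (\<xi> \<bullet> v j)\<^sup>2"
proof -
  have "signal_energy j
      \<le> real j powr (p - 1 - \<epsilon>) * (C1 * real j powr (- q))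
          * (C1 powr \<nu> * real j powr (- q * \<nu>) * (\<xi> \<bullet> v j)\<^sup>2)"
    unfolding signal_energy_eq[OF j]
    using \<sigma>_rate(2)[OF j] xhat_coef_sq_le[OF j] C1_pos by (intro mult_mono) auto
  also have "\<dots> = C1 powr (1 + \<nu>)
      * (real j powr (p - 1 - \<epsilon>) * real j powr (- q) * real j powr (- q * \<nu>)) * (\<xi> \<bullet> v j)\<^sup>2"
    using C1_pos by (simp add: powr_add)
  also have "real j powr (p - 1 - \<epsilon>) * real j powr (- q) * real j powr (- q * \<nu>) = real j powr (- aexp)"
    by (simp add: powr_add[symmetric] aexp_def bexp_def algebra_simps)
  finally show ?thesis .
qed

lemma signal_energy_ge: assumes j: "j \<ge> 1"
  shows "c1 * real j powr (- bexp) * (xhat_coef j)\<^sup>2 \<le> signal_energy j"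
proof -
  have "c1 * real j powr (- bexp) * (xhat_coef j)\<^sup>2
      = real j powr (p - 1 - \<epsilon>) * (c1 * real j powr (- q)) * (xhat_coef j)\<^sup>2"
    by (simp add: powr_add[symmetric] bexp_def algebra_simps)
  also have "\<dots> \<le> signal_energy j"
    unfolding signal_energy_eq[OF j] using \<sigma>_rate(2)[OF j] by (intro mult_right_mono mult_left_mono) auto
  finally show ?thesis .
qed

lemma signal_energy_tail_le:
  assumes "k \<ge> 1" and F: "finite F" "F \<subseteq> {k+1..}"
  shows "(\<Sum>j\<in>F. signal_energy j) \<le> C1 powr (1 + \<nu>) * (norm \<xi>)\<^sup>2 / real k powr aexp"
proof -
  have "(\<Sum>j\<in>F. signal_energy j) \<le> (\<Sum>j\<in>F. C1 powr (1 + \<nu>) * real k powr (- aexp) * (\<xi> \<bullet> v j)\<^sup>2)"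
  proof (intro sum_mono)
    fix j assume "j \<in> F"
    then have j: "j \<ge> 1" and "k < j" using F by auto
    then have "real j powr (- aexp) \<le> real k powr (- aexp)"
      using \<open>k \<ge> 1\<close> aexp_pos by (intro powr_mono2') auto
    then have "C1 powr (1 + \<nu>) * real j powr (- aexp) * (\<xi> \<bullet> v j)\<^sup>2
        \<le> C1 powr (1 + \<nu>) * real k powr (- aexp) * (\<xi> \<bullet> v j)\<^sup>2"
      by (intro mult_right_mono mult_left_mono) auto
    then show "signal_energy j \<le> C1 powr (1 + \<nu>) * real k powr (- aexp) * (\<xi> \<bullet> v j)\<^sup>2"
      using signal_energy_le[OF j] by linarith
  qed
  also have "\<dots> \<le> C1 powr (1 + \<nu>) * real k powr (- aexp) * (norm \<xi>)\<^sup>2"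
  proof -
    have "F \<subseteq> {1..}" using F(2) by auto
    then show ?thesis
      using bessel_inequality[OF v_on F(1), of \<xi>]
      by (simp only: sum_distrib_left[symmetric]) (intro mult_left_mono, auto)
  qed
  finally show ?thesis by (simp add: powr_minus divide_inverse mult_ac)
qed

lemma signal_energy_sum_le:
  assumes F: "finite F" "F \<subseteq> {1..}"
  shows "(\<Sum>j\<in>F. signal_energy j) \<le> C1 powr (1 + \<nu>) * (norm \<xi>)\<^sup>2"
proof -
  have "(\<Sum>j\<in>F. signal_energy j) \<le> (\<Sum>j\<in>F. C1 powr (1 + \<nu>) * (\<xi> \<bullet> v j)\<^sup>2)"
  proof (intro sum_mono)
    fix j assume "j \<in> F"
    then have j: "j \<ge> 1" using F by auto
    then have "real j powr (- aexp) \<le> 1"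
      using aexp_pos powr_mono2'[of "- aexp" 1 "real j"] by simp
    then have "C1 powr (1 + \<nu>) * real j powr (- aexp) * (\<xi> \<bullet> v j)\<^sup>2 \<le> C1 powr (1 + \<nu>) * 1 * (\<xi> \<bullet> v j)\<^sup>2"
      by (intro mult_right_mono mult_left_mono) auto
    then show "signal_energy j \<le> C1 powr (1 + \<nu>) * (\<xi> \<bullet> v j)\<^sup>2"
      using signal_energy_le[OF j] by linarith
  qed
  also have "\<dots> = C1 powr (1 + \<nu>) * (\<Sum>j\<in>F. (\<xi> \<bullet> v j)\<^sup>2)"
    by (simp add: sum_distrib_left)
  also have "\<dots> \<le> C1 powr (1 + \<nu>) * (norm \<xi>)\<^sup>2"
    using bessel_inequality[OF v_on F, of \<xi>] by (intro mult_left_mono) auto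
  finally show ?thesis .
qed

section \<open>The discrepancy principle on a good event\<close>

text \<open>The weighted energies are \<open>ennreal\<close>-valued series, so they are defined and measurable without
  any summability assumption; finiteness is part of the good event.\<close>

definition sample_noise_energy :: "nat \<Rightarrow> 'a \<Rightarrow> ennreal" where
  "sample_noise_energy i \<omega> = (\<Sum>j. ennreal ((weight j)\<^sup>2 * (noise i j \<omega>)\<^sup>2))"

definition mean_noise_energy :: "nat \<Rightarrow> 'a \<Rightarrow> ennreal" where
  "mean_noise_energy n \<omega> = (\<Sum>j. ennreal ((weight j)\<^sup>2 * (noise_mean n j \<omega>)\<^sup>2))"

definition mean_noise_tail :: "nat \<Rightarrow> nat \<Rightarrow> 'a \<Rightarrow> ennreal" where
  "mean_noise_tail n k \<omega> = (\<Sum>j. ennreal (if k < j then (weight j)\<^sup>2 * (noise_mean n j \<omega>)\<^sup>2 else 0))"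

definition resid_energy :: "nat \<Rightarrow> nat \<Rightarrow> 'a \<Rightarrow> real" where
  "resid_energy n i \<omega> = infsum (\<lambda>j. (weight j)\<^sup>2 * ((Y i \<omega> - ybar Y n \<omega>) \<bullet> u j)\<^sup>2) {1..}"

definition data_energy :: "nat \<Rightarrow> nat \<Rightarrow> 'a \<Rightarrow> real" where
  "data_energy n j \<omega> = (weight j)\<^sup>2 * (ybar Y n \<omega> \<bullet> u j)\<^sup>2"

lemma delta'_eq:
  "delta' weight u Y n \<omega> = (1 / sqrt (real n)) * sqrt (1 / (real n - 1) * (\<Sum>i=1..n. resid_energy n i \<omega>))"
  by (simp add: delta'_def resid_energy_def)

lemma kstop_eq:
  "kstop weight u Y n \<omega>
     = (LEAST k. sqrt (infsum (\<lambda>j. data_energy n j \<omega>) {k+1..}) \<le> delta' weight u Y n \<omega>)"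
  by (simp add: kstop_def data_energy_def)

lemma resid_energy_nonneg: "0 \<le> resid_energy n i \<omega>"
  unfolding resid_energy_def by (intro infsum_nonneg) auto

lemma resid_energy_bounds:
  assumes n: "n \<ge> 1" and fin_sample: "sample_noise_energy i \<omega> \<noteq> top"
    and fin_mean: "mean_noise_energy n \<omega> \<noteq> top"
  shows "resid_energy n i \<omega>
           \<le> 2 * enn2real (sample_noise_energy i \<omega>) + 2 * enn2real (mean_noise_energy n \<omega>)"
    and "(noise i 1 \<omega> - noise_mean n 1 \<omega>)\<^sup>2 \<le> resid_energy n i \<omega>"
proof -
  define f where "f j = (weight j)\<^sup>2 * (noise i j \<omega> - noise_mean n j \<omega>)\<^sup>2" for j
  have resid_eq: "resid_energy n i \<omega> = infsum f {1..}"
    unfolding resid_energy_def f_def resid_inner_u[OF n] ..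
  have f_nonneg: "0 \<le> f j" for j by (simp add: f_def)
  have finite_sums: "sum f F
      \<le> 2 * enn2real (sample_noise_energy i \<omega>) + 2 * enn2real (mean_noise_energy n \<omega>)"
    if F: "finite F" for F
  proof -
    have "sum f F \<le> (\<Sum>j\<in>F. 2 * ((weight j)\<^sup>2 * (noise i j \<omega>)\<^sup>2)
                              + 2 * ((weight j)\<^sup>2 * (noise_mean n j \<omega>)\<^sup>2))"
    proof (intro sum_mono)
      fix j
      have "f j \<le> (weight j)\<^sup>2 * (2 * (noise i j \<omega>)\<^sup>2 + 2 * (noise_mean n j \<omega>)\<^sup>2)"
        unfolding f_def by (intro mult_left_mono square_diff_le) auto
      then show "f j \<le> 2 * ((weight j)\<^sup>2 * (noise i j \<omega>)\<^sup>2) + 2 * ((weight j)\<^sup>2 * (noise_mean n j \<omega>)\<^sup>2)"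
        by (simp add: algebra_simps)
    qed
    also have "\<dots> = 2 * (\<Sum>j\<in>F. (weight j)\<^sup>2 * (noise i j \<omega>)\<^sup>2)
                    + 2 * (\<Sum>j\<in>F. (weight j)\<^sup>2 * (noise_mean n j \<omega>)\<^sup>2)"
      by (simp add: sum.distrib sum_distrib_left)
    also have "\<dots> \<le> 2 * enn2real (sample_noise_energy i \<omega>) + 2 * enn2real (mean_noise_energy n \<omega>)"
    proof -
      have "(\<Sum>j\<in>F. (weight j)\<^sup>2 * (noise i j \<omega>)\<^sup>2) \<le> enn2real (sample_noise_energy i \<omega>)"
        unfolding sample_noise_energy_def
        by (rule sum_le_enn2real_suminf) (use fin_sample F in \<open>auto simp: sample_noise_energy_def\<close>)
      moreover have "(\<Sum>j\<in>F. (weight j)\<^sup>2 * (noise_mean n j \<omega>)\<^sup>2) \<le> enn2real (mean_noise_energy n \<omega>)"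
        unfolding mean_noise_energy_def
        by (rule sum_le_enn2real_suminf) (use fin_mean F in \<open>auto simp: mean_noise_energy_def\<close>)
      ultimately show ?thesis by linarith
    qed
    finally show ?thesis .
  qed
  show "resid_energy n i \<omega>
      \<le> 2 * enn2real (sample_noise_energy i \<omega>) + 2 * enn2real (mean_noise_energy n \<omega>)"
    unfolding resid_eq by (rule infsum_le_of_finite_sums_le[OF finite_sums]) auto
  have "f summable_on {1..}" by (rule summable_on_of_finite_sums_le[OF finite_sums f_nonneg])
  then have "sum f {1} \<le> infsum f {1..}" by (rule finite_sum_le_infsum) (auto simp: f_nonneg)
  then show "(noise i 1 \<omega> - noise_mean n 1 \<omega>)\<^sup>2 \<le> resid_energy n i \<omega>"
    by (simp add: resid_eq f_def)
qed

lemma resid_energy_sum_le: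
  assumes n: "n \<ge> 1" and T: "T > 0"
    and sample: "(\<Sum>i=1..n. sample_noise_energy i \<omega>) < ennreal (real n * T)"
    and mean: "mean_noise_energy n \<omega> < ennreal (T / real n)"
  shows "(\<Sum>i=1..n. resid_energy n i \<omega>) \<le> 2 * real n * T + 2 * T"
proof -
  have fin_sample: "sample_noise_energy i \<omega> < top" if "i \<in> {1..n}" for i
  proof -
    have "sample_noise_energy i \<omega> \<le> (\<Sum>i=1..n. sample_noise_energy i \<omega>)"
      by (rule member_le_sum) (use that in auto)
    also have "\<dots> < top" using sample by (simp add: top.not_eq_extremum less_le_trans)
    finally show ?thesis .
  qed
  have fin_mean: "mean_noise_energy n \<omega> < top" using mean by (simp add: top.not_eq_extremum less_le_trans)
  have "ennreal (\<Sum>i=1..n. enn2real (sample_noise_energy i \<omega>))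
      = (\<Sum>i=1..n. ennreal (enn2real (sample_noise_energy i \<omega>)))"
    by (rule sum_ennreal[symmetric]) auto
  also have "\<dots> = (\<Sum>i=1..n. sample_noise_energy i \<omega>)"
    using fin_sample by (intro sum.cong refl) auto
  finally have "ennreal (\<Sum>i=1..n. enn2real (sample_noise_energy i \<omega>)) < ennreal (real n * T)"
    using sample by simp
  then have sum_sample: "(\<Sum>i=1..n. enn2real (sample_noise_energy i \<omega>)) \<le> real n * T"
    by (subst (asm) ennreal_less_iff) (auto intro: sum_nonneg)
  have mean_le: "enn2real (mean_noise_energy n \<omega>) \<le> T / real n"
    using mean T by (intro enn2real_leI) auto
  have "(\<Sum>i=1..n. resid_energy n i \<omega>)
      \<le> (\<Sum>i=1..n. 2 * enn2real (sample_noise_energy i \<omega>) + 2 * enn2real (mean_noise_energy n \<omega>))"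
    using fin_sample fin_mean
    by (intro sum_mono resid_energy_bounds(1)[OF n]) (auto simp: less_top[symmetric])
  also have "\<dots> = 2 * (\<Sum>i=1..n. enn2real (sample_noise_energy i \<omega>))
                  + 2 * real n * enn2real (mean_noise_energy n \<omega>)"
    by (simp add: sum.distrib sum_distrib_left)
  also have "\<dots> \<le> 2 * (real n * T) + 2 * real n * (T / real n)"
    using sum_sample mean_le by (intro add_mono mult_left_mono) auto
  also have "2 * real n * (T / real n) = 2 * T" using n by simp
  finally show ?thesis by (simp add: mult.assoc)
qed

lemma resid_energy_sum_gt:
  assumes n: "n \<ge> 1"
    and fin_sample: "\<And>i. i \<in> {1..n} \<Longrightarrow> sample_noise_energy i \<omega> \<noteq> top"
    and fin_mean: "mean_noise_energy n \<omega> \<noteq> top"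
    and spread: "real n * m / 2 < (\<Sum>i=1..n. min ((noise i 1 \<omega>)\<^sup>2) 1)"
    and mean_small: "(noise_mean n 1 \<omega>)\<^sup>2 < m / 4"
  shows "real n * m / 4 < (\<Sum>i=1..n. resid_energy n i \<omega>)"
proof -
  have "(\<Sum>i=1..n. (noise i 1 \<omega> - noise_mean n 1 \<omega>)\<^sup>2) \<le> (\<Sum>i=1..n. resid_energy n i \<omega>)"
    using fin_sample fin_mean by (intro sum_mono resid_energy_bounds(2)[OF n]) auto
  moreover have "(\<Sum>i=1..n. (noise i 1 \<omega> - noise_mean n 1 \<omega>)\<^sup>2)
      = (\<Sum>i=1..n. (noise i 1 \<omega>)\<^sup>2) - real n * (noise_mean n 1 \<omega>)\<^sup>2"
    using sum_square_deviation[OF n, of "\<lambda>i. noise i 1 \<omega>"] by (simp add: noise_mean_def)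
  moreover have "(\<Sum>i=1..n. min ((noise i 1 \<omega>)\<^sup>2) 1) \<le> (\<Sum>i=1..n. (noise i 1 \<omega>)\<^sup>2)"
    by (intro sum_mono) auto
  moreover have "real n * (noise_mean n 1 \<omega>)\<^sup>2 \<le> real n * (m / 4)"
    using mean_small by (intro mult_left_mono) auto
  ultimately show ?thesis using spread by linarith
qed

lemma delta'_sq:
  assumes n: "n \<ge> 2"
  shows "(delta' weight u Y n \<omega>)\<^sup>2 = (\<Sum>i=1..n. resid_energy n i \<omega>) / (real n * (real n - 1))"
    and "0 \<le> delta' weight u Y n \<omega>"
proof -
  define S where "S = (\<Sum>i=1..n. resid_energy n i \<omega>)"
  have S: "0 \<le> S" unfolding S_def by (intro sum_nonneg resid_energy_nonneg)
  have n': "real n \<ge> 2" using n by simp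
  show "0 \<le> delta' weight u Y n \<omega>"
    unfolding delta'_eq S_def[symmetric] using S n' by (intro mult_nonneg_nonneg real_sqrt_ge_zero) auto
  show "(delta' weight u Y n \<omega>)\<^sup>2 = (\<Sum>i=1..n. resid_energy n i \<omega>) / (real n * (real n - 1))"
    unfolding delta'_eq S_def[symmetric] using S n'
    by (simp add: power_mult_distrib real_sqrt_pow2 field_simps)
qed

lemma data_energy_le:
  assumes "n \<ge> 1"
  shows "data_energy n j \<omega> \<le> 2 * signal_energy j + 2 * ((weight j)\<^sup>2 * (noise_mean n j \<omega>)\<^sup>2)"
proof -
  have "data_energy n j \<omega> \<le> (weight j)\<^sup>2 * (2 * (y_hat \<bullet> u j)\<^sup>2 + 2 * (noise_mean n j \<omega>)\<^sup>2)"
    unfolding data_energy_def ybar_inner_u[OF assms] by (intro mult_left_mono square_add_le) auto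
  then show ?thesis by (simp add: signal_energy_def algebra_simps)
qed

lemma signal_energy_le_data:
  assumes "n \<ge> 1"
  shows "signal_energy j \<le> 2 * data_energy n j \<omega> + 2 * ((weight j)\<^sup>2 * (noise_mean n j \<omega>)\<^sup>2)"
proof -
  have "(y_hat \<bullet> u j)\<^sup>2 \<le> 2 * (ybar Y n \<omega> \<bullet> u j)\<^sup>2 + 2 * (noise_mean n j \<omega>)\<^sup>2"
    using square_diff_le[of "ybar Y n \<omega> \<bullet> u j" "noise_mean n j \<omega>"]
    unfolding ybar_inner_u[OF assms] by simp
  then have "signal_energy j \<le> (weight j)\<^sup>2 * (2 * (ybar Y n \<omega> \<bullet> u j)\<^sup>2 + 2 * (noise_mean n j \<omega>)\<^sup>2)"
    unfolding signal_energy_def by (intro mult_left_mono) auto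
  then show ?thesis by (simp add: data_energy_def algebra_simps)
qed

lemma data_energy_summable:
  assumes n: "n \<ge> 1" and fin_mean: "mean_noise_energy n \<omega> \<noteq> top"
  shows "(\<lambda>j. data_energy n j \<omega>) summable_on {k+1..}"
proof (rule summable_on_of_finite_sums_le)
  fix F :: "nat set" assume F: "finite F" "F \<subseteq> {k+1..}"
  then have F1: "F \<subseteq> {1..}" by auto
  have "sum (\<lambda>j. data_energy n j \<omega>) F
      \<le> (\<Sum>j\<in>F. 2 * signal_energy j + 2 * ((weight j)\<^sup>2 * (noise_mean n j \<omega>)\<^sup>2))"
    using data_energy_le[OF n] by (intro sum_mono)
  also have "\<dots> = 2 * (\<Sum>j\<in>F. signal_energy j) + 2 * (\<Sum>j\<in>F. (weight j)\<^sup>2 * (noise_mean n j \<omega>)\<^sup>2)"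
    by (simp add: sum.distrib sum_distrib_left)
  also have "\<dots> \<le> 2 * (C1 powr (1 + \<nu>) * (norm \<xi>)\<^sup>2) + 2 * enn2real (mean_noise_energy n \<omega>)"
  proof -
    have "(\<Sum>j\<in>F. (weight j)\<^sup>2 * (noise_mean n j \<omega>)\<^sup>2) \<le> enn2real (mean_noise_energy n \<omega>)"
      unfolding mean_noise_energy_def
      by (rule sum_le_enn2real_suminf) (use fin_mean F in \<open>auto simp: mean_noise_energy_def\<close>)
    then show ?thesis using signal_energy_sum_le[OF F(1) F1] by linarith
  qed
  finally show "sum (\<lambda>j. data_energy n j \<omega>) F
      \<le> 2 * (C1 powr (1 + \<nu>) * (norm \<xi>)\<^sup>2) + 2 * enn2real (mean_noise_energy n \<omega>)" .
qed (simp add: data_energy_def)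

lemma kstop_le:
  assumes "sqrt (infsum (\<lambda>j. data_energy n j \<omega>) {k+1..}) \<le> delta' weight u Y n \<omega>"
  shows "kstop weight u Y n \<omega> \<le> k"
    and "sqrt (infsum (\<lambda>j. data_energy n j \<omega>) {kstop weight u Y n \<omega> + 1..}) \<le> delta' weight u Y n \<omega>"
  unfolding kstop_eq using assms by (auto intro: Least_le LeastI)

lemma data_energy_tail_le:
  assumes n: "n \<ge> 1" and m: "m \<ge> 0"
    and tail: "mean_noise_tail n k \<omega> < ennreal (m / (16 * real n))"
    and signal: "\<And>F. finite F \<Longrightarrow> F \<subseteq> {k+1..} \<Longrightarrow> (\<Sum>j\<in>F. signal_energy j) \<le> m / (16 * real n)"
  shows "infsum (\<lambda>j. data_energy n j \<omega>) {k+1..} \<le> m / (4 * real n)"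
proof (rule infsum_le_of_finite_sums_le)
  fix F assume F: "finite F" "F \<subseteq> {k+1..}"
  have "sum (\<lambda>j. data_energy n j \<omega>) F
      \<le> (\<Sum>j\<in>F. 2 * signal_energy j + 2 * ((weight j)\<^sup>2 * (noise_mean n j \<omega>)\<^sup>2))"
    using data_energy_le[OF n] by (intro sum_mono)
  also have "\<dots> = 2 * (\<Sum>j\<in>F. signal_energy j) + 2 * (\<Sum>j\<in>F. (weight j)\<^sup>2 * (noise_mean n j \<omega>)\<^sup>2)"
    by (simp add: sum.distrib sum_distrib_left)
  also have "(\<Sum>j\<in>F. (weight j)\<^sup>2 * (noise_mean n j \<omega>)\<^sup>2)
      = (\<Sum>j\<in>F. if k < j then (weight j)\<^sup>2 * (noise_mean n j \<omega>)\<^sup>2 else 0)"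
    using F by (intro sum.cong) auto
  also have "(\<Sum>j\<in>F. if k < j then (weight j)\<^sup>2 * (noise_mean n j \<omega>)\<^sup>2 else 0)
      \<le> enn2real (mean_noise_tail n k \<omega>)"
  proof -
    have fin_tail: "mean_noise_tail n k \<omega> \<noteq> top" using tail by auto
    show ?thesis
      unfolding mean_noise_tail_def
      by (rule sum_le_enn2real_suminf) (use fin_tail F in \<open>auto simp: mean_noise_tail_def\<close>)
  qed
  also have "enn2real (mean_noise_tail n k \<omega>) \<le> m / (16 * real n)"
    using tail m n by (intro enn2real_leI) auto
  finally show "sum (\<lambda>j. data_energy n j \<omega>) F \<le> m / (4 * real n)" using signal[OF F] by simp
qed (use m in simp)

lemma signal_energy_tail_le_data:
  assumes n: "n \<ge> 1" and fin_mean: "mean_noise_energy n \<omega> \<noteq> top"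
    and F: "finite F" "F \<subseteq> {k+1..}"
  shows "(\<Sum>j\<in>F. signal_energy j)
    \<le> 2 * infsum (\<lambda>j. data_energy n j \<omega>) {k+1..} + 2 * enn2real (mean_noise_energy n \<omega>)"
proof -
  have "(\<Sum>j\<in>F. signal_energy j)
      \<le> (\<Sum>j\<in>F. 2 * data_energy n j \<omega> + 2 * ((weight j)\<^sup>2 * (noise_mean n j \<omega>)\<^sup>2))"
    using signal_energy_le_data[OF n] by (intro sum_mono)
  also have "\<dots> = 2 * (\<Sum>j\<in>F. data_energy n j \<omega>) + 2 * (\<Sum>j\<in>F. (weight j)\<^sup>2 * (noise_mean n j \<omega>)\<^sup>2)"
    by (simp add: sum.distrib sum_distrib_left)
  also have "(\<Sum>j\<in>F. data_energy n j \<omega>) \<le> infsum (\<lambda>j. data_energy n j \<omega>) {k+1..}"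
    using data_energy_summable[OF n fin_mean] F by (rule finite_sum_le_infsum) (simp add: data_energy_def)
  also have "(\<Sum>j\<in>F. (weight j)\<^sup>2 * (noise_mean n j \<omega>)\<^sup>2) \<le> enn2real (mean_noise_energy n \<omega>)"
    unfolding mean_noise_energy_def
    by (rule sum_le_enn2real_suminf) (use fin_mean F in \<open>auto simp: mean_noise_energy_def\<close>)
  finally show ?thesis by simp
qed

section \<open>Probability of the good event\<close>

lemma nn_integral_suminf_eq_suminf_expectation:
  fixes f :: "nat \<Rightarrow> 'a \<Rightarrow> real"
  assumes [measurable]: "\<And>j. f j \<in> borel_measurable M" and nonneg: "\<And>j \<omega>. 0 \<le> f j \<omega>"
    and int: "\<And>j. integrable M (f j)" and summable: "summable (\<lambda>j. expectation (f j))"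
  shows "(\<integral>\<^sup>+\<omega>. (\<Sum>j. ennreal (f j \<omega>)) \<partial>M) = ennreal (\<Sum>j. expectation (f j))"
proof -
  have "(\<integral>\<^sup>+\<omega>. (\<Sum>j. ennreal (f j \<omega>)) \<partial>M) = (\<Sum>j. (\<integral>\<^sup>+\<omega>. ennreal (f j \<omega>) \<partial>M))"
    by (rule nn_integral_suminf) measurable
  also have "\<dots> = (\<Sum>j. ennreal (expectation (f j)))"
    by (intro arg_cong[where f=suminf] ext nn_integral_eq_integral int) (auto simp: nonneg)
  also have "\<dots> = ennreal (\<Sum>j. expectation (f j))"
    by (rule suminf_ennreal2[OF _ summable]) (auto intro: integral_nonneg_AE simp: nonneg)
  finally show ?thesis .
qed

lemma sample_noise_energy_measurable[measurable]:
  "i \<ge> 1 \<Longrightarrow> sample_noise_energy i \<in> borel_measurable M"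
  unfolding sample_noise_energy_def[abs_def] by measurable

lemma mean_noise_energy_measurable[measurable]: "mean_noise_energy n \<in> borel_measurable M"
  unfolding mean_noise_energy_def[abs_def] by measurable

lemma mean_noise_tail_measurable[measurable]: "mean_noise_tail n k \<in> borel_measurable M"
  unfolding mean_noise_tail_def[abs_def] by measurable

definition weighted_var_sum :: real where
  "weighted_var_sum = (\<Sum>j. (weight j)\<^sup>2 * noise_var j)"

definition weighted_var_tail :: "nat \<Rightarrow> real" where
  "weighted_var_tail k = (\<Sum>j. if k < j then (weight j)\<^sup>2 * noise_var j else 0)"

lemma weighted_var_le: "(weight j)\<^sup>2 * noise_var j \<le> C2 * real j powr (- 1 - \<epsilon>)"
proof (cases "j = 0")
  case False
  then have "(weight j)\<^sup>2 * noise_var j \<le> real j powr (p - 1 - \<epsilon>) * (C2 * real j powr (- p))"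
    using noise_rate(2)[of j] by (simp add: weight_sq noise_var_eq mult_left_mono)
  also have "\<dots> = C2 * real j powr (- 1 - \<epsilon>)" using False by (simp add: powr_add[symmetric])
  finally show ?thesis .
qed simp

lemma weighted_var_summable: "summable (\<lambda>j. (weight j)\<^sup>2 * noise_var j)"
proof (rule summable_comparison_test'[where g="\<lambda>j. C2 * real j powr (- 1 - \<epsilon>)"])
  show "summable (\<lambda>j. C2 * real j powr (- 1 - \<epsilon>))"
    using \<epsilon> by (intro summable_mult) (simp add: summable_real_powr_iff)
  show "norm ((weight j)\<^sup>2 * noise_var j) \<le> C2 * real j powr (- 1 - \<epsilon>)" for j
    using weighted_var_le[of j] noise_var_nonneg[of j] by simp
qed

lemma weighted_var_tail_summable: "summable (\<lambda>j. if k < j then (weight j)\<^sup>2 * noise_var j else 0)"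
  by (rule summable_comparison_test'[OF weighted_var_summable]) (auto simp: noise_var_nonneg)

lemma weighted_var_tail_tendsto_0: "weighted_var_tail \<longlonglongrightarrow> 0"
  unfolding weighted_var_tail_def[abs_def] by (rule suminf_tail_tendsto_0[OF weighted_var_summable])

lemma weighted_var_sum_nonneg: "0 \<le> weighted_var_sum"
  unfolding weighted_var_sum_def by (intro suminf_nonneg weighted_var_summable) (simp add: noise_var_nonneg)

lemma weighted_var_tail_nonneg: "0 \<le> weighted_var_tail k"
  unfolding weighted_var_tail_def
  by (intro suminf_nonneg weighted_var_tail_summable) (simp add: noise_var_nonneg)

lemma nn_integral_sample_noise_energy:
  assumes i: "i \<ge> 1"
  shows "(\<integral>\<^sup>+\<omega>. sample_noise_energy i \<omega> \<partial>M) = ennreal weighted_var_sum"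
proof -
  have int: "integrable M (\<lambda>\<omega>. (weight j)\<^sup>2 * (noise i j \<omega>)\<^sup>2)" for j
    by (cases "j = 0") (auto simp: noise_sq_integrable[OF i])
  have ex: "expectation (\<lambda>\<omega>. (weight j)\<^sup>2 * (noise i j \<omega>)\<^sup>2) = (weight j)\<^sup>2 * noise_var j" for j
    by (simp add: noise_sq_expectation[OF i])
  have "summable (\<lambda>j. expectation (\<lambda>\<omega>. (weight j)\<^sup>2 * (noise i j \<omega>)\<^sup>2))"
    unfolding ex by (rule weighted_var_summable)
  then show ?thesis
    unfolding sample_noise_energy_def weighted_var_sum_def ex[symmetric] using i int
    by (intro nn_integral_suminf_eq_suminf_expectation) auto
qed

lemma nn_integral_mean_noise_tail:
  assumes n: "n \<ge> 1"
  shows "(\<integral>\<^sup>+\<omega>. mean_noise_tail n k \<omega> \<partial>M) = ennreal (weighted_var_tail k / real n)"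
proof -
  define f where "f j = (\<lambda>\<omega>. if k < j then (weight j)\<^sup>2 * (noise_mean n j \<omega>)\<^sup>2 else 0)" for j
  have int: "integrable M (f j)" for j
    by (cases "j = 0"; cases "k < j") (auto simp: f_def noise_mean_sq(1)[OF n])
  have ex: "expectation (f j) = (if k < j then (weight j)\<^sup>2 * noise_var j else 0) / real n" for j
    by (cases "j = 0"; cases "k < j") (auto simp: f_def noise_mean_sq(2)[OF n])
  have meas: "f j \<in> borel_measurable M" for j unfolding f_def by measurable
  have nonneg: "0 \<le> f j \<omega>" for j \<omega> by (simp add: f_def)
  have summable: "summable (\<lambda>j. expectation (f j))"
    unfolding ex by (intro summable_divide weighted_var_tail_summable)
  have "mean_noise_tail n k \<omega> = (\<Sum>j. ennreal (f j \<omega>))" for \<omega>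
    by (simp add: mean_noise_tail_def f_def)
  then have "(\<integral>\<^sup>+\<omega>. mean_noise_tail n k \<omega> \<partial>M) = ennreal (\<Sum>j. expectation (f j))"
    using nn_integral_suminf_eq_suminf_expectation[OF meas nonneg int summable] by simp
  also have "(\<Sum>j. expectation (f j)) = weighted_var_tail k / real n"
    unfolding ex weighted_var_tail_def by (rule suminf_divide[OF weighted_var_tail_summable])
  finally show ?thesis .
qed

lemma nn_integral_mean_noise_energy:
  assumes n: "n \<ge> 1"
  shows "(\<integral>\<^sup>+\<omega>. mean_noise_energy n \<omega> \<partial>M) = ennreal (weighted_var_sum / real n)"
proof -
  have "mean_noise_energy n = mean_noise_tail n 0"
    unfolding mean_noise_energy_def[abs_def] mean_noise_tail_def[abs_def]
    by (intro ext suminf_cong) auto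
  moreover have "weighted_var_tail 0 = weighted_var_sum"
    unfolding weighted_var_tail_def weighted_var_sum_def by (intro suminf_cong) auto
  ultimately show ?thesis using nn_integral_mean_noise_tail[OF n, of 0] by simp
qed

text \<open>Truncating the squared noise at \<open>1\<close> keeps it bounded, so Chebyshev's inequality bounds the
  probability that the sample is too concentrated without assuming higher moments.\<close>

definition trunc_var :: real where
  "trunc_var = expectation (\<lambda>\<omega>. min ((noise 1 1 \<omega>)\<^sup>2) 1)"

definition variance_term :: "nat \<Rightarrow> nat \<Rightarrow> 'a \<Rightarrow> real" where
  "variance_term n k \<omega> = (\<Sum>j=1..k. (noise_mean n j \<omega> / \<sigma> j)\<^sup>2)"

lemma trunc_noise_integrable: "integrable M (\<lambda>\<omega>. min ((noise 1 1 \<omega>)\<^sup>2) 1)"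
  by (rule integrable_const_bound[where B=1]) auto

lemma trunc_var_pos: "trunc_var > 0"
proof (rule ccontr)
  assume "\<not> trunc_var > 0"
  moreover have "trunc_var \<ge> 0" unfolding trunc_var_def by (intro integral_nonneg_AE) auto
  ultimately have "trunc_var = 0" by simp
  then have "AE \<omega> in M. min ((noise 1 1 \<omega>)\<^sup>2) 1 = 0"
    using integral_nonneg_eq_0_iff_AE[OF trunc_noise_integrable] unfolding trunc_var_def by auto
  then have "AE \<omega> in M. (noise 1 1 \<omega>)\<^sup>2 = 0"
    by eventually_elim (auto simp: min_def split: if_splits)
  then have "noise_var 1 = 0"
    unfolding noise_var_def by (subst integral_cong_AE[where g="\<lambda>_. 0"]) auto
  moreover have "c2 \<le> noise_var 1" using noise_rate(2)[of 1] by (simp add: noise_var_eq)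
  ultimately show False using noise_rate(1) by simp
qed

lemma trunc_var_le_1: "trunc_var \<le> 1"
  using integral_mono[OF trunc_noise_integrable, of "\<lambda>_. 1"] by (simp add: trunc_var_def prob_space)

lemma prob_ge_le_expectation:
  assumes "integrable M U" "\<And>\<omega>. \<omega> \<in> space M \<Longrightarrow> 0 \<le> U \<omega>" "0 < c"
  shows "prob {\<omega>\<in>space M. c \<le> U \<omega>} \<le> expectation U / c"
  using integral_Markov_inequality_measure[OF assms(1) sets.top _ assms(3)] assms(2) by auto

lemma prob_sum_sample_noise_energy_ge:
  assumes n: "n \<ge> 1" and T: "T > 0"
  shows "prob {\<omega>\<in>space M. ennreal (real n * T) \<le> (\<Sum>i=1..n. sample_noise_energy i \<omega>)}
           \<le> weighted_var_sum / T"
proof -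
  have "(\<integral>\<^sup>+\<omega>. (\<Sum>i=1..n. sample_noise_energy i \<omega>) \<partial>M) = (\<Sum>i=1..n. (\<integral>\<^sup>+\<omega>. sample_noise_energy i \<omega> \<partial>M))"
    by (rule nn_integral_sum) auto
  also have "\<dots> = ennreal (real n * weighted_var_sum)"
    using weighted_var_sum_nonneg
    by (simp add: nn_integral_sample_noise_energy ennreal_mult' ennreal_of_nat_eq_real_of_nat)
  finally have "prob {\<omega>\<in>space M. ennreal (real n * T) \<le> (\<Sum>i=1..n. sample_noise_energy i \<omega>)}
      \<le> (real n * weighted_var_sum) / (real n * T)"
    using n T weighted_var_sum_nonneg by (intro prob_ennreal_ge_le[OF M]) auto
  then show ?thesis using n by simp
qed

lemma prob_mean_noise_energy_ge:
  assumes n: "n \<ge> 1" and T: "T > 0"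
  shows "prob {\<omega>\<in>space M. ennreal (T / real n) \<le> mean_noise_energy n \<omega>} \<le> weighted_var_sum / T"
proof -
  have "prob {\<omega>\<in>space M. ennreal (T / real n) \<le> mean_noise_energy n \<omega>}
      \<le> (weighted_var_sum / real n) / (T / real n)"
    using n T weighted_var_sum_nonneg nn_integral_mean_noise_energy[OF n]
    by (intro prob_ennreal_ge_le[OF M]) auto
  then show ?thesis using n by simp
qed

lemma prob_mean_noise_tail_ge:
  assumes n: "n \<ge> 1" and c: "c > 0"
  shows "prob {\<omega>\<in>space M. ennreal c \<le> mean_noise_tail n k \<omega>} \<le> weighted_var_tail k / (real n * c)"
proof -
  have "prob {\<omega>\<in>space M. ennreal c \<le> mean_noise_tail n k \<omega>} \<le> (weighted_var_tail k / real n) / c"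
    using n c weighted_var_tail_nonneg nn_integral_mean_noise_tail[OF n]
    by (intro prob_ennreal_ge_le[OF M]) auto
  then show ?thesis by simp
qed

lemma prob_variance_term_ge:
  assumes n: "n \<ge> 1" and c: "c > 0"
  shows "prob {\<omega>\<in>space M. c \<le> variance_term n k \<omega>}
           \<le> (\<Sum>j=1..k. noise_var j / (\<sigma> j)\<^sup>2) / (real n * c)"
proof -
  have int: "integrable M (\<lambda>\<omega>. (noise_mean n j \<omega> / \<sigma> j)\<^sup>2)" if "j \<in> {1..k}" for j
    using noise_mean_sq(1)[OF n, of j] that by (simp add: power_divide)
  then have "integrable M (variance_term n k)"
    unfolding variance_term_def[abs_def] by (intro Bochner_Integration.integrable_sum) auto
  then have "prob {\<omega>\<in>space M. c \<le> variance_term n k \<omega>} \<le> expectation (variance_term n k) / c"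
    by (rule prob_ge_le_expectation) (simp_all add: variance_term_def sum_nonneg c)
  also have "expectation (variance_term n k) = (\<Sum>j=1..k. noise_var j / (\<sigma> j)\<^sup>2 / real n)"
    unfolding variance_term_def[abs_def] using int noise_mean_sq(2)[OF n]
    by (subst Bochner_Integration.integral_sum) (auto simp: power_divide intro!: sum.cong)
  finally show ?thesis by (simp add: sum_divide_distrib mult.assoc)
qed

lemma prob_noise_mean_sq_ge:
  assumes n: "n \<ge> 1"
  shows "prob {\<omega>\<in>space M. trunc_var / 4 \<le> (noise_mean n 1 \<omega>)\<^sup>2} \<le> 4 * noise_var 1 / (real n * trunc_var)"
proof -
  have "prob {\<omega>\<in>space M. trunc_var / 4 \<le> (noise_mean n 1 \<omega>)\<^sup>2}
      \<le> expectation (\<lambda>\<omega>. (noise_mean n 1 \<omega>)\<^sup>2) / (trunc_var / 4)"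
    using trunc_var_pos by (intro prob_ge_le_expectation noise_mean_sq(1)[OF n]) auto
  then show ?thesis using noise_mean_sq(2)[OF n, of 1] by (simp add: mult.commute)
qed

definition trunc_noise_dev :: "'y \<Rightarrow> real" where
  "trunc_noise_dev y = min (((y - y_hat) \<bullet> u 1)\<^sup>2) 1 - trunc_var"

lemma trunc_noise_dev_measurable[measurable]: "trunc_noise_dev \<in> borel_measurable borel"
  unfolding trunc_noise_dev_def[abs_def] by measurable

lemma abs_trunc_noise_dev_le: "\<bar>trunc_noise_dev y\<bar> \<le> 1"
proof -
  define z where "z = ((y - y_hat) \<bullet> u 1)\<^sup>2"
  have "0 \<le> z" by (simp add: z_def)
  then show ?thesis
    using trunc_var_pos trunc_var_le_1 unfolding trunc_noise_dev_def z_def[symmetric] min_def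
    by (auto simp: abs_le_iff)
qed

lemma trunc_noise_dev_moments:
  shows "integrable M (\<lambda>\<omega>. trunc_noise_dev (Y 1 \<omega>))"
    and "integrable M (\<lambda>\<omega>. (trunc_noise_dev (Y 1 \<omega>))\<^sup>2)"
    and "expectation (\<lambda>\<omega>. trunc_noise_dev (Y 1 \<omega>)) = 0"
    and "expectation (\<lambda>\<omega>. (trunc_noise_dev (Y 1 \<omega>))\<^sup>2) \<le> 1"
proof -
  show int: "integrable M (\<lambda>\<omega>. trunc_noise_dev (Y 1 \<omega>))"
    by (rule integrable_const_bound[where B=1]) (auto simp: abs_trunc_noise_dev_le)
  show sq_int: "integrable M (\<lambda>\<omega>. (trunc_noise_dev (Y 1 \<omega>))\<^sup>2)"
    by (rule integrable_const_bound[where B=1]) (auto simp: abs_square_le_1 abs_trunc_noise_dev_le)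
  have "expectation (\<lambda>\<omega>. trunc_noise_dev (Y 1 \<omega>)) = trunc_var - expectation (\<lambda>\<omega>. trunc_var)"
    unfolding trunc_noise_dev_def trunc_var_def using trunc_noise_integrable
    by (subst Bochner_Integration.integral_diff) (auto simp: noise_def)
  then show "expectation (\<lambda>\<omega>. trunc_noise_dev (Y 1 \<omega>)) = 0" by (simp add: prob_space)
  show "expectation (\<lambda>\<omega>. (trunc_noise_dev (Y 1 \<omega>))\<^sup>2) \<le> 1"
    using integral_mono[OF sq_int, of "\<lambda>_. 1"]
    by (simp add: abs_square_le_1 abs_trunc_noise_dev_le prob_space)
qed

lemma prob_trunc_noise_sum_le:
  assumes n: "n \<ge> 1"
  shows "prob {\<omega>\<in>space M. (\<Sum>i=1..n. min ((noise i 1 \<omega>)\<^sup>2) 1) \<le> real n * trunc_var / 2}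
           \<le> 4 / (real n * trunc_var\<^sup>2)"
proof -
  note moment = second_moment_sum_centered[OF trunc_noise_dev_measurable trunc_noise_dev_moments(1-3), of n]
  define c where "c = (real n * trunc_var / 2)\<^sup>2"
  have c: "c > 0" using n trunc_var_pos by (simp add: c_def)
  have "{\<omega>\<in>space M. (\<Sum>i=1..n. min ((noise i 1 \<omega>)\<^sup>2) 1) \<le> real n * trunc_var / 2}
      \<subseteq> {\<omega>\<in>space M. c \<le> (\<Sum>i=1..n. trunc_noise_dev (Y i \<omega>))\<^sup>2}"
  proof safe
    fix \<omega> assume "(\<Sum>i=1..n. min ((noise i 1 \<omega>)\<^sup>2) 1) \<le> real n * trunc_var / 2"
    moreover have "(\<Sum>i=1..n. trunc_noise_dev (Y i \<omega>)) = (\<Sum>i=1..n. min ((noise i 1 \<omega>)\<^sup>2) 1) - real n * trunc_var"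
      by (simp add: trunc_noise_dev_def noise_def sum_subtractf)
    ultimately have "(\<Sum>i=1..n. trunc_noise_dev (Y i \<omega>)) \<le> - (real n * trunc_var / 2)" by simp
    moreover have "0 \<le> real n * trunc_var / 2" using trunc_var_pos by simp
    ultimately have "\<bar>real n * trunc_var / 2\<bar> \<le> \<bar>\<Sum>i=1..n. trunc_noise_dev (Y i \<omega>)\<bar>"
      by (auto simp: abs_if)
    then show "c \<le> (\<Sum>i=1..n. trunc_noise_dev (Y i \<omega>))\<^sup>2" by (simp only: c_def abs_le_square_iff)
  qed
  then have "prob {\<omega>\<in>space M. (\<Sum>i=1..n. min ((noise i 1 \<omega>)\<^sup>2) 1) \<le> real n * trunc_var / 2}
      \<le> prob {\<omega>\<in>space M. c \<le> (\<Sum>i=1..n. trunc_noise_dev (Y i \<omega>))\<^sup>2}"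
    by (intro finite_measure_mono) measurable
  also have "\<dots> \<le> expectation (\<lambda>\<omega>. (\<Sum>i=1..n. trunc_noise_dev (Y i \<omega>))\<^sup>2) / c"
    using c by (intro prob_ge_le_expectation moment(1)) auto
  also have "\<dots> \<le> real n / c"
    using moment(2) trunc_noise_dev_moments(4) c n by (simp add: divide_right_mono mult_left_le)
  also have "\<dots> = 4 / (real n * trunc_var\<^sup>2)"
    using n trunc_var_pos by (simp add: c_def power2_eq_square field_simps)
  finally show ?thesis .
qed

section \<open>Bias, variance and the rate\<close>

definition xi_coef_sq :: "nat \<Rightarrow> real" where
  "xi_coef_sq j = (if j \<ge> 1 then (\<xi> \<bullet> v j)\<^sup>2 else 0)"

definition xi_tail :: "nat \<Rightarrow> real" where
  "xi_tail N = (\<Sum>j. if N < j then xi_coef_sq j else 0)"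

lemma xi_coef_sq_nonneg: "0 \<le> xi_coef_sq j"
  by (simp add: xi_coef_sq_def)

lemma xi_coef_sq_summable: "summable xi_coef_sq"
proof (rule summableI_nonneg_bounded[where x="(norm \<xi>)\<^sup>2"])
  fix n
  have "(\<Sum>i<n. xi_coef_sq i) = (\<Sum>i\<in>{..<n} \<inter> {1..}. (\<xi> \<bullet> v i)\<^sup>2)"
    by (subst sum.inter_restrict) (auto simp: xi_coef_sq_def)
  also have "\<dots> \<le> (norm \<xi>)\<^sup>2" by (rule bessel_inequality[OF v_on]) auto
  finally show "(\<Sum>i<n. xi_coef_sq i) \<le> (norm \<xi>)\<^sup>2" .
qed (rule xi_coef_sq_nonneg)

lemma xi_tail_tendsto_0: "xi_tail \<longlonglongrightarrow> 0"
  unfolding xi_tail_def[abs_def] by (rule suminf_tail_tendsto_0[OF xi_coef_sq_summable])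

lemma xhat_coef_sum_le_low:
  assumes F: "finite F" "\<And>j. j \<in> F \<Longrightarrow> 1 \<le> j \<and> real j \<le> m"
  shows "(\<Sum>j\<in>F. (xhat_coef j)\<^sup>2) \<le> m powr bexp / c1 * (\<Sum>j\<in>F. signal_energy j)"
proof -
  have "(\<Sum>j\<in>F. (xhat_coef j)\<^sup>2) \<le> (\<Sum>j\<in>F. m powr bexp / c1 * signal_energy j)"
  proof (intro sum_mono)
    fix j assume "j \<in> F"
    then have j: "j \<ge> 1" and jm: "real j \<le> m" using F by auto
    have "(xhat_coef j)\<^sup>2 = real j powr bexp * (real j powr (- bexp) * (xhat_coef j)\<^sup>2)"
      using j by (simp add: powr_minus field_simps)
    also have "\<dots> \<le> m powr bexp * (real j powr (- bexp) * (xhat_coef j)\<^sup>2)"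
      using jm j bexp_pos by (intro mult_right_mono powr_mono2) auto
    also have "\<dots> \<le> m powr bexp * (signal_energy j / c1)"
      using signal_energy_ge[OF j] \<sigma>_rate(1) by (intro mult_left_mono) (auto simp: field_simps)
    finally show "(xhat_coef j)\<^sup>2 \<le> m powr bexp / c1 * signal_energy j" by simp
  qed
  then show ?thesis by (simp add: sum_distrib_left)
qed

lemma xhat_coef_sum_le_high:
  assumes m: "m > 0" and F: "finite F" "\<And>j. j \<in> F \<Longrightarrow> 1 \<le> j \<and> m < real j"
  shows "(\<Sum>j\<in>F. (xhat_coef j)\<^sup>2) \<le> C1 powr \<nu> * m powr (- q * \<nu>) * xi_tail (nat \<lfloor>m\<rfloor>)"
proof -
  have "(\<Sum>j\<in>F. (xhat_coef j)\<^sup>2) \<le> (\<Sum>j\<in>F. C1 powr \<nu> * m powr (- q * \<nu>) * xi_coef_sq j)"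
  proof (intro sum_mono)
    fix j assume "j \<in> F"
    then have j: "j \<ge> 1" and jm: "m < real j" using F by auto
    have "real j powr (- q * \<nu>) \<le> m powr (- q * \<nu>)"
      using jm m qp \<nu> by (intro powr_mono2') (auto simp: mult_pos_pos)
    then have "C1 powr \<nu> * real j powr (- q * \<nu>) * (\<xi> \<bullet> v j)\<^sup>2 \<le> C1 powr \<nu> * m powr (- q * \<nu>) * (\<xi> \<bullet> v j)\<^sup>2"
      by (intro mult_right_mono mult_left_mono) auto
    then show "(xhat_coef j)\<^sup>2 \<le> C1 powr \<nu> * m powr (- q * \<nu>) * xi_coef_sq j"
      using xhat_coef_sq_le[OF j] j by (simp add: xi_coef_sq_def)
  qed
  also have "\<dots> = C1 powr \<nu> * m powr (- q * \<nu>) * sum xi_coef_sq F" by (simp add: sum_distrib_left)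
  also have "sum xi_coef_sq F \<le> xi_tail (nat \<lfloor>m\<rfloor>)"
    unfolding xi_tail_def
  proof (rule sum_le_suminf_tail[OF xi_coef_sq_nonneg xi_coef_sq_summable F(1)])
    fix j assume "j \<in> F"
    then have "m < real j" using F by auto
    then show "nat \<lfloor>m\<rfloor> < j" using m by linarith
  qed
  finally show ?thesis by (simp add: mult_left_mono)
qed

lemma xhat_coef_sum_le:
  assumes m: "m > 0" and F: "finite F" "F \<subseteq> {1..}"
    and signal: "(\<Sum>j\<in>F. signal_energy j) \<le> B"
  shows "(\<Sum>j\<in>F. (xhat_coef j)\<^sup>2)
           \<le> m powr bexp / c1 * B + C1 powr \<nu> * m powr (- q * \<nu>) * xi_tail (nat \<lfloor>m\<rfloor>)"
proof -
  define F1 where "F1 = {j\<in>F. real j \<le> m}"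
  define F2 where "F2 = {j\<in>F. \<not> real j \<le> m}"
  have "(\<Sum>j\<in>F1. signal_energy j) \<le> (\<Sum>j\<in>F. signal_energy j)"
    using F by (intro sum_mono2) (auto simp: F1_def signal_energy_def)
  then have "m powr bexp / c1 * (\<Sum>j\<in>F1. signal_energy j) \<le> m powr bexp / c1 * B"
    using signal \<sigma>_rate(1) by (intro mult_left_mono) auto
  moreover have "(\<Sum>j\<in>F1. (xhat_coef j)\<^sup>2) \<le> m powr bexp / c1 * (\<Sum>j\<in>F1. signal_energy j)"
    using F by (intro xhat_coef_sum_le_low) (auto simp: F1_def)
  moreover have "(\<Sum>j\<in>F2. (xhat_coef j)\<^sup>2) \<le> C1 powr \<nu> * m powr (- q * \<nu>) * xi_tail (nat \<lfloor>m\<rfloor>)"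
    using F m by (intro xhat_coef_sum_le_high) (auto simp: F2_def)
  moreover have "(\<Sum>j\<in>F. (xhat_coef j)\<^sup>2) = (\<Sum>j\<in>F1. (xhat_coef j)\<^sup>2) + (\<Sum>j\<in>F2. (xhat_coef j)\<^sup>2)"
    using F(1) by (subst sum.union_disjoint[symmetric]) (auto simp: F1_def F2_def intro: sum.cong)
  ultimately show ?thesis by linarith
qed

definition zeta_sum :: real where "zeta_sum = (\<Sum>j. real j powr (- 1 - \<epsilon> / 2))"

lemma zeta_sum_summable: "summable (\<lambda>j. real j powr (- 1 - \<epsilon> / 2))"
  using \<epsilon> by (simp add: summable_real_powr_iff)

lemma zeta_sum_nonneg: "0 \<le> zeta_sum"
  unfolding zeta_sum_def by (intro suminf_nonneg zeta_sum_summable) auto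

text \<open>Writing \<open>j powr (q - p)\<close> as \<open>j powr (bexp - \<epsilon> / 2)\<close> times the summable \<open>j powr (- 1 - \<epsilon> / 2)\<close>
  leaves the margin \<open>\<epsilon> / 2\<close> by which the variance term is negligible against the rate.\<close>

lemma noise_var_ratio_sum_le:
  assumes "k \<ge> 1"
  shows "(\<Sum>j=1..k. noise_var j / (\<sigma> j)\<^sup>2) \<le> C2 / c1 * zeta_sum * real k powr (1 + q - p + \<epsilon> / 2)"
proof -
  define e where "e = 1 + q - p + \<epsilon> / 2"
  have e: "e > 0" using qp \<epsilon> by (simp add: e_def)
  have C: "0 \<le> C2 / c1" using C2_pos \<sigma>_rate(1) by simp
  have "(\<Sum>j=1..k. noise_var j / (\<sigma> j)\<^sup>2) \<le> (\<Sum>j=1..k. C2 / c1 * real k powr e * real j powr (- 1 - \<epsilon> / 2))"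
  proof (intro sum_mono)
    fix j assume "j \<in> {1..k}"
    then have j: "j \<ge> 1" and jk: "j \<le> k" by auto
    have "noise_var j / (\<sigma> j)\<^sup>2 \<le> (C2 * real j powr (- p)) / (c1 * real j powr (- q))"
      using noise_rate(2)[OF j] \<sigma>_rate j noise_var_nonneg[of j] C2_pos
      by (intro frac_le) (auto simp: noise_var_eq)
    also have "\<dots> = C2 / c1 * (real j powr e * real j powr (- 1 - \<epsilon> / 2))"
      using j \<sigma>_rate(1) by (simp add: powr_add[symmetric] powr_minus e_def field_simps)
    also have "\<dots> \<le> C2 / c1 * (real k powr e * real j powr (- 1 - \<epsilon> / 2))"
      using jk j e C by (intro mult_left_mono mult_right_mono powr_mono2) auto
    finally show "noise_var j / (\<sigma> j)\<^sup>2 \<le> C2 / c1 * real k powr e * real j powr (- 1 - \<epsilon> / 2)"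
      by (simp add: mult_ac)
  qed
  also have "\<dots> = C2 / c1 * real k powr e * (\<Sum>j=1..k. real j powr (- 1 - \<epsilon> / 2))"
    by (simp add: sum_distrib_left)
  also have "\<dots> \<le> C2 / c1 * real k powr e * zeta_sum"
  proof (rule mult_left_mono)
    show "(\<Sum>j=1..k. real j powr (- 1 - \<epsilon> / 2)) \<le> zeta_sum"
      unfolding zeta_sum_def by (rule sum_le_suminf[OF zeta_sum_summable]) auto
    show "0 \<le> C2 / c1 * real k powr e" using C by (intro mult_nonneg_nonneg) auto
  qed
  finally show ?thesis by (simp add: e_def mult_ac)
qed

lemma ybar_measurable[measurable]: "(\<lambda>\<omega>. ybar Y n \<omega>) \<in> borel_measurable M"
  unfolding ybar_def by measurable

lemma kstop_measurable: "(\<lambda>\<omega>. kstop weight u Y n \<omega>) \<in> measurable M (count_space UNIV)"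
proof -
  have [measurable]: "(\<lambda>\<omega>. resid_energy n i \<omega>) \<in> borel_measurable M" if "i \<ge> 1" for i
    unfolding resid_energy_def using that by (intro borel_measurable_infsum_nonneg) auto
  have [measurable]: "(\<lambda>\<omega>. delta' weight u Y n \<omega>) \<in> borel_measurable M"
    unfolding delta'_eq by measurable
  have [measurable]: "(\<lambda>\<omega>. infsum (\<lambda>j. data_energy n j \<omega>) {k+1..}) \<in> borel_measurable M" for k
    unfolding data_energy_def by (intro borel_measurable_infsum_nonneg) auto
  show ?thesis unfolding kstop_eq by measurable
qed

definition estimation_error :: "nat \<Rightarrow> 'a \<Rightarrow> real" where
  "estimation_error n \<omega> = norm (xbar \<sigma> u v (ybar Y n \<omega>) (kstop weight u Y n \<omega>) - x_hat)"

lemma estimation_error_measurable[measurable]: "estimation_error n \<in> borel_measurable M"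
proof -
  have "(\<lambda>\<omega>. (\<lambda>k \<omega>. norm (xbar \<sigma> u v (ybar Y n \<omega>) k - x_hat)) (kstop weight u Y n \<omega>) \<omega>)
      \<in> borel_measurable M"
    by (rule measurable_compose_countable[OF _ kstop_measurable]) (unfold xbar_def, measurable)
  then show ?thesis by (simp add: estimation_error_def[abs_def])
qed

lemma discrepancy_sq_bounds:
  assumes n: "n \<ge> 2" and T: "T > 0"
    and sample: "(\<Sum>i=1..n. sample_noise_energy i \<omega>) < ennreal (real n * T)"
    and mean: "mean_noise_energy n \<omega> < ennreal (T / real n)"
    and spread: "real n * m / 2 < (\<Sum>i=1..n. min ((noise i 1 \<omega>)\<^sup>2) 1)"
    and mean_small: "(noise_mean n 1 \<omega>)\<^sup>2 < m / 4"
  shows "m / (4 * real n) \<le> (delta' weight u Y n \<omega>)\<^sup>2"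
    and "(delta' weight u Y n \<omega>)\<^sup>2 \<le> 6 * T / real n"
proof -
  define S where "S = (\<Sum>i=1..n. resid_energy n i \<omega>)"
  have n1: "n \<ge> 1" and n': "real n \<ge> 2" using n by auto
  have S: "0 \<le> S" unfolding S_def by (intro sum_nonneg resid_energy_nonneg)
  have fin_sample: "sample_noise_energy i \<omega> \<noteq> top" if "i \<in> {1..n}" for i
  proof -
    have "sample_noise_energy i \<omega> \<le> (\<Sum>i=1..n. sample_noise_energy i \<omega>)"
      by (rule member_le_sum) (use that in auto)
    also have "\<dots> < top" using sample by (simp add: top.not_eq_extremum less_le_trans)
    finally show ?thesis by simp
  qed
  have fin_mean: "mean_noise_energy n \<omega> \<noteq> top" using mean by auto
  have "m / (4 * real n) = (real n * m / 4) / (real n * real n)" using n' by (simp add: field_simps)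
  also have "\<dots> \<le> S / (real n * real n)"
    using resid_energy_sum_gt[OF n1 fin_sample fin_mean spread mean_small] n'
    by (intro divide_right_mono) (auto simp: S_def)
  also have "\<dots> \<le> S / (real n * (real n - 1))"
    using S n' by (intro divide_left_mono mult_left_mono mult_pos_pos) auto
  finally show "m / (4 * real n) \<le> (delta' weight u Y n \<omega>)\<^sup>2"
    using delta'_sq(1)[OF n] by (simp add: S_def)
  have "S / (real n * (real n - 1)) \<le> (2 * real n * T + 2 * T) / (real n * (real n - 1))"
    using resid_energy_sum_le[OF n1 T sample mean] n' by (intro divide_right_mono) (auto simp: S_def)
  also have "\<dots> \<le> 6 * T / real n"
    using n' T by (simp add: field_simps)
  finally show "(delta' weight u Y n \<omega>)\<^sup>2 \<le> 6 * T / real n"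
    using delta'_sq(1)[OF n] by (simp add: S_def)
qed

lemma kstop_bounds:
  assumes n: "n \<ge> 2" and T: "T > 0"
    and sample: "(\<Sum>i=1..n. sample_noise_energy i \<omega>) < ennreal (real n * T)"
    and mean: "mean_noise_energy n \<omega> < ennreal (T / real n)"
    and tail: "mean_noise_tail n k \<omega> < ennreal (trunc_var / (16 * real n))"
    and spread: "real n * trunc_var / 2 < (\<Sum>i=1..n. min ((noise i 1 \<omega>)\<^sup>2) 1)"
    and mean_small: "(noise_mean n 1 \<omega>)\<^sup>2 < trunc_var / 4"
    and signal: "\<And>F. finite F \<Longrightarrow> F \<subseteq> {k+1..} \<Longrightarrow> (\<Sum>j\<in>F. signal_energy j) \<le> trunc_var / (16 * real n)"
  shows "kstop weight u Y n \<omega> \<le> k"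
    and "\<And>F. finite F \<Longrightarrow> F \<subseteq> {kstop weight u Y n \<omega> + 1..} \<Longrightarrow>
            (\<Sum>j\<in>F. signal_energy j) \<le> 14 * T / real n"
proof -
  note \<delta> = discrepancy_sq_bounds[OF n T sample mean spread mean_small]
  have n1: "n \<ge> 1" using n by simp
  have \<delta>_nonneg: "0 \<le> delta' weight u Y n \<omega>" by (rule delta'_sq(2)[OF n])
  have "infsum (\<lambda>j. data_energy n j \<omega>) {k+1..} \<le> trunc_var / (4 * real n)"
    using trunc_var_pos by (intro data_energy_tail_le[OF n1 _ tail signal]) auto
  then have stops: "sqrt (infsum (\<lambda>j. data_energy n j \<omega>) {k+1..}) \<le> delta' weight u Y n \<omega>"
    using \<delta>(1) by (intro real_le_lsqrt[OF \<delta>_nonneg]) linarith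
  show "kstop weight u Y n \<omega> \<le> k" by (rule kstop_le(1)[OF stops])
  define ks where "ks = kstop weight u Y n \<omega>"
  have data_tail: "infsum (\<lambda>j. data_energy n j \<omega>) {ks+1..} \<le> 6 * T / real n"
  proof -
    have "infsum (\<lambda>j. data_energy n j \<omega>) {ks+1..} \<le> (delta' weight u Y n \<omega>)\<^sup>2"
      using kstop_le(2)[OF stops] unfolding ks_def by (rule sqrt_le_D)
    then show ?thesis using \<delta>(2) by simp
  qed
  have mean_le: "enn2real (mean_noise_energy n \<omega>) \<le> T / real n"
    using mean T by (intro enn2real_leI) auto
  fix F assume "finite F" "F \<subseteq> {kstop weight u Y n \<omega> + 1..}"
  then have "(\<Sum>j\<in>F. signal_energy j)
      \<le> 2 * infsum (\<lambda>j. data_energy n j \<omega>) {ks+1..} + 2 * enn2real (mean_noise_energy n \<omega>)"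
    using mean by (intro signal_energy_tail_le_data[OF n1]) (auto simp: ks_def)
  then show "(\<Sum>j\<in>F. signal_energy j) \<le> 14 * T / real n" using data_tail mean_le by linarith
qed

lemma signal_energy_tail_le_trunc_var:
  assumes n: "n \<ge> 1" and k: "k \<ge> 1"
    and large: "16 * real n * C1 powr (1 + \<nu>) * ((norm \<xi>)\<^sup>2 + 1) / trunc_var \<le> real k powr aexp"
    and F: "finite F" "F \<subseteq> {k+1..}"
  shows "(\<Sum>j\<in>F. signal_energy j) \<le> trunc_var / (16 * real n)"
proof -
  have k': "real k powr aexp > 0" using k by simp
  have "(\<Sum>j\<in>F. signal_energy j) \<le> C1 powr (1 + \<nu>) * (norm \<xi>)\<^sup>2 / real k powr aexp"
    by (rule signal_energy_tail_le[OF k F])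
  also have "\<dots> \<le> C1 powr (1 + \<nu>) * ((norm \<xi>)\<^sup>2 + 1) / real k powr aexp"
    using k' by (intro divide_right_mono mult_left_mono) auto
  also have "\<dots> \<le> trunc_var / (16 * real n)"
    using large trunc_var_pos k' n by (simp add: field_simps)
  finally show ?thesis .
qed

lemma xhat_tail_le_rate:
  assumes n: "n \<ge> 1" and T: "T > 0" and c: "c > 0"
    and lam: "lam > 0" "lam powr bexp = c\<^sup>2 * c1 / (112 * T)"
    and xi_small: "C1 powr \<nu> * lam powr (- q * \<nu>) * xi_tail (nat \<lfloor>lam * real n powr (1 / aexp)\<rfloor>)
                     \<le> c\<^sup>2 / 8"
    and F: "finite F" "F \<subseteq> {1..}"
    and signal: "(\<Sum>j\<in>F. signal_energy j) \<le> 14 * T / real n"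
  shows "(\<Sum>j\<in>F. (xhat_coef j)\<^sup>2) \<le> c\<^sup>2 * real n powr (- rate) / 4"
proof -
  define m where "m = lam * real n powr (1 / aexp)"
  have m: "m > 0" using lam n by (simp add: m_def)
  have "(\<Sum>j\<in>F. (xhat_coef j)\<^sup>2)
      \<le> m powr bexp / real n * (14 * T / c1) + real n powr (- rate)
          * (C1 powr \<nu> * lam powr (- q * \<nu>) * xi_tail (nat \<lfloor>m\<rfloor>))"
    using xhat_coef_sum_le[OF m F signal] n
    unfolding m_def powr_scaled_root[OF n lam(1)] by (simp add: rate_def field_simps)
  also have "m powr bexp / real n = lam powr bexp * real n powr (- rate)"
    unfolding m_def rate_eq by (rule powr_scaled_root_div[OF n lam(1)])
  also have "lam powr bexp * real n powr (- rate) * (14 * T / c1) = c\<^sup>2 / 8 * real n powr (- rate)"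
    using lam(2) T \<sigma>_rate(1) by (simp add: field_simps)
  also have "real n powr (- rate) * (C1 powr \<nu> * lam powr (- q * \<nu>) * xi_tail (nat \<lfloor>m\<rfloor>))
      \<le> real n powr (- rate) * (c\<^sup>2 / 8)"
    using xi_small by (intro mult_left_mono) (auto simp: m_def)
  finally show ?thesis by (simp add: field_simps)
qed

lemma error_le_on_good_event:
  assumes n: "n \<ge> 2" and T: "T > 0" and c: "c > 0"
    and lam: "lam > 0" "lam powr bexp = c\<^sup>2 * c1 / (112 * T)"
    and xi_small: "C1 powr \<nu> * lam powr (- q * \<nu>) * xi_tail (nat \<lfloor>lam * real n powr (1 / aexp)\<rfloor>)
                     \<le> c\<^sup>2 / 8"
    and k: "k \<ge> 1" "16 * real n * C1 powr (1 + \<nu>) * ((norm \<xi>)\<^sup>2 + 1) / trunc_var \<le> real k powr aexp"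
    and sample: "(\<Sum>i=1..n. sample_noise_energy i \<omega>) < ennreal (real n * T)"
    and mean: "mean_noise_energy n \<omega> < ennreal (T / real n)"
    and tail: "mean_noise_tail n k \<omega> < ennreal (trunc_var / (16 * real n))"
    and spread: "real n * trunc_var / 2 < (\<Sum>i=1..n. min ((noise i 1 \<omega>)\<^sup>2) 1)"
    and mean_small: "(noise_mean n 1 \<omega>)\<^sup>2 < trunc_var / 4"
    and variance: "variance_term n k \<omega> < c\<^sup>2 * real n powr (- rate) / 4"
  shows "estimation_error n \<omega> \<le> c * (1 / sqrt (real n)) powr rate"
proof -
  have n1: "n \<ge> 1" using n by simp
  note stop = kstop_bounds[OF n T sample mean tail spread mean_small
      signal_energy_tail_le_trunc_var[OF n1 k]]
  define ks where "ks = kstop weight u Y n \<omega>"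
  define t where "t = c\<^sup>2 * real n powr (- rate) / 4"
  have bound: "estimation_error n \<omega> \<le> sqrt (\<Sum>j=1..ks. (noise_mean n j \<omega> / \<sigma> j)\<^sup>2) + sqrt t"
    unfolding estimation_error_def ks_def t_def
    using stop(2) by (intro error_le_variance_plus_bias[OF n1] xhat_tail_le_rate[OF n1 T c lam xi_small])
      auto
  have "(\<Sum>j=1..ks. (noise_mean n j \<omega> / \<sigma> j)\<^sup>2) \<le> variance_term n k \<omega>"
    unfolding variance_term_def ks_def using stop(1) by (intro sum_mono2) auto
  then have "sqrt (\<Sum>j=1..ks. (noise_mean n j \<omega> / \<sigma> j)\<^sup>2) \<le> sqrt t"
    using variance unfolding t_def by (intro real_sqrt_le_mono) linarith
  then have "estimation_error n \<omega> \<le> 2 * sqrt t" using bound by linarith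
  also have "\<dots> = c * (1 / sqrt (real n)) powr rate"
    unfolding t_def by (rule inverse_sqrt_powr_eq[OF n1 c, symmetric])
  finally show ?thesis .
qed

lemma prob_variance_term_ge_rate:
  assumes n: "n \<ge> 1" and c: "c > 0" and Kc: "Kc > 0"
    and k: "k \<ge> 1" "real k \<le> 2 * Kc * real n powr (1 / aexp)"
  shows "prob {\<omega>\<in>space M. c\<^sup>2 * real n powr (- rate) / 4 \<le> variance_term n k \<omega>}
           \<le> 4 * C2 / c1 * zeta_sum * (2 * Kc) powr (1 + q - p + \<epsilon> / 2) / c\<^sup>2
               * real n powr (- \<epsilon> / (2 * aexp))"
proof -
  define e where "e = 1 + q - p + \<epsilon> / 2"
  have e: "e > 0" using qp \<epsilon> by (simp add: e_def)
  have n': "real n > 0" using n by simp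
  define t where "t = c\<^sup>2 * real n powr (- rate) / 4"
  have t: "t > 0" using c n' by (simp add: t_def)
  have C: "0 \<le> C2 / c1 * zeta_sum" using C2_pos \<sigma>_rate(1) zeta_sum_nonneg by simp
  have "real k powr e \<le> (2 * Kc * real n powr (1 / aexp)) powr e"
    using k e by (intro powr_mono2) auto
  also have "\<dots> = (2 * Kc) powr e * real n powr (e / aexp)"
    using Kc n' by (simp add: powr_mult powr_powr)
  finally have k_pow: "real k powr e \<le> (2 * Kc) powr e * real n powr (e / aexp)" .
  have exponent: "real n powr (e / aexp) / (real n * real n powr (- rate)) = real n powr (- \<epsilon> / (2 * aexp))"
  proof -
    have "e / aexp - 1 + rate = - \<epsilon> / (2 * aexp)"
      using aexp_pos by (simp add: rate_eq e_def bexp_def field_simps)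
    then show ?thesis
      using n' by (simp add: powr_diff[symmetric] powr_add[symmetric] powr_minus field_simps)
  qed
  have "prob {\<omega>\<in>space M. t \<le> variance_term n k \<omega>} \<le> (\<Sum>j=1..k. noise_var j / (\<sigma> j)\<^sup>2) / (real n * t)"
    by (rule prob_variance_term_ge[OF n t])
  also have "\<dots> \<le> (C2 / c1 * zeta_sum * ((2 * Kc) powr e * real n powr (e / aexp))) / (real n * t)"
  proof -
    have "(\<Sum>j=1..k. noise_var j / (\<sigma> j)\<^sup>2) \<le> C2 / c1 * zeta_sum * real k powr e"
      using noise_var_ratio_sum_le[OF k(1)] by (simp add: e_def)
    also have "\<dots> \<le> C2 / c1 * zeta_sum * ((2 * Kc) powr e * real n powr (e / aexp))"
      using k_pow C by (rule mult_left_mono)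
    finally show ?thesis using n' t by (intro divide_right_mono) auto
  qed
  also have "\<dots> = 4 * C2 / c1 * zeta_sum * (2 * Kc) powr e / c\<^sup>2
                  * (real n powr (e / aexp) / (real n * real n powr (- rate)))"
    using c by (simp add: t_def field_simps)
  also have "\<dots> = 4 * C2 / c1 * zeta_sum * (2 * Kc) powr e / c\<^sup>2 * real n powr (- \<epsilon> / (2 * aexp))"
    unfolding exponent ..
  finally show ?thesis by (simp only: t_def e_def)
qed

lemma prob_error_gt_le:
  assumes n: "n \<ge> 2" and T: "T > 0" and c: "c > 0"
    and lam: "lam > 0" "lam powr bexp = c\<^sup>2 * c1 / (112 * T)"
    and xi_small: "C1 powr \<nu> * lam powr (- q * \<nu>) * xi_tail (nat \<lfloor>lam * real n powr (1 / aexp)\<rfloor>)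
                     \<le> c\<^sup>2 / 8"
    and Kc: "Kc > 0"
    and k: "k \<ge> 1" "real k \<le> 2 * Kc * real n powr (1 / aexp)"
      "16 * real n * C1 powr (1 + \<nu>) * ((norm \<xi>)\<^sup>2 + 1) / trunc_var \<le> real k powr aexp"
  shows "prob {\<omega>\<in>space M. \<not> estimation_error n \<omega> \<le> c * (1 / sqrt (real n)) powr rate}
           \<le> 2 * (weighted_var_sum / T) + 16 * weighted_var_tail k / trunc_var
              + 4 * C2 / c1 * zeta_sum * (2 * Kc) powr (1 + q - p + \<epsilon> / 2) / c\<^sup>2
                  * real n powr (- \<epsilon> / (2 * aexp))
              + 4 / (real n * trunc_var\<^sup>2) + 4 * noise_var 1 / (real n * trunc_var)"
proof -
  have n1: "n \<ge> 1" and n': "real n > 0" using n by auto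
  define EU where "EU = {\<omega>\<in>space M. ennreal (real n * T) \<le> (\<Sum>i=1..n. sample_noise_energy i \<omega>)}"
  define EA where "EA = {\<omega>\<in>space M. ennreal (T / real n) \<le> mean_noise_energy n \<omega>}"
  define Et where "Et = {\<omega>\<in>space M. ennreal (trunc_var / (16 * real n)) \<le> mean_noise_tail n k \<omega>}"
  define EV where "EV = {\<omega>\<in>space M. c\<^sup>2 * real n powr (- rate) / 4 \<le> variance_term n k \<omega>}"
  define E1 where "E1 = {\<omega>\<in>space M. (\<Sum>i=1..n. min ((noise i 1 \<omega>)\<^sup>2) 1) \<le> real n * trunc_var / 2}"
  define E2 where "E2 = {\<omega>\<in>space M. trunc_var / 4 \<le> (noise_mean n 1 \<omega>)\<^sup>2}"
  have [measurable]: "EU \<in> sets M" "EA \<in> sets M" "Et \<in> sets M" "EV \<in> sets M" "E1 \<in> sets M" "E2 \<in> sets M"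
    unfolding EU_def EA_def Et_def EV_def E1_def E2_def variance_term_def[abs_def] by measurable
  have incl: "{\<omega>\<in>space M. \<not> estimation_error n \<omega> \<le> c * (1 / sqrt (real n)) powr rate}
      \<subseteq> EU \<union> EA \<union> Et \<union> EV \<union> E1 \<union> E2"
  proof (rule subsetI, rule ccontr)
    fix \<omega> assume bad: "\<omega> \<in> {\<omega>\<in>space M. \<not> estimation_error n \<omega> \<le> c * (1 / sqrt (real n)) powr rate}"
      and "\<omega> \<notin> EU \<union> EA \<union> Et \<union> EV \<union> E1 \<union> E2"
    then have "\<omega> \<notin> EU" "\<omega> \<notin> EA" "\<omega> \<notin> Et" "\<omega> \<notin> EV" "\<omega> \<notin> E1" "\<omega> \<notin> E2" "\<omega> \<in> space M"
      by auto
    then have "estimation_error n \<omega> \<le> c * (1 / sqrt (real n)) powr rate"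
      unfolding EU_def EA_def Et_def EV_def E1_def E2_def
      by (intro error_le_on_good_event[OF n T c lam xi_small k(1) k(3)]) (simp_all add: not_le)
    then show False using bad by simp
  qed
  have U: "EU \<union> EA \<in> sets M" "EU \<union> EA \<union> Et \<in> sets M" "EU \<union> EA \<union> Et \<union> EV \<in> sets M"
    "EU \<union> EA \<union> Et \<union> EV \<union> E1 \<in> sets M" "EU \<union> EA \<union> Et \<union> EV \<union> E1 \<union> E2 \<in> sets M"
    by measurable
  have "prob Et \<le> weighted_var_tail k / (real n * (trunc_var / (16 * real n)))"
    unfolding Et_def using trunc_var_pos n' by (intro prob_mean_noise_tail_ge[OF n1]) auto
  then have "prob Et \<le> 16 * weighted_var_tail k / trunc_var"
    using n' trunc_var_pos by (simp add: field_simps)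
  then show ?thesis
    using finite_measure_mono[OF incl U(5)] measure_Un_le[OF U(4) \<open>E2 \<in> sets M\<close>]
      measure_Un_le[OF U(3) \<open>E1 \<in> sets M\<close>] measure_Un_le[OF U(2) \<open>EV \<in> sets M\<close>]
      measure_Un_le[OF U(1) \<open>Et \<in> sets M\<close>] measure_Un_le[OF \<open>EU \<in> sets M\<close> \<open>EA \<in> sets M\<close>]
      prob_sum_sample_noise_energy_ge[OF n1 T] prob_mean_noise_energy_ge[OF n1 T]
      prob_variance_term_ge_rate[OF n1 c Kc k(1,2)]
      prob_trunc_noise_sum_le[OF n1] prob_noise_mean_sq_ge[OF n1]
    unfolding EU_def EA_def EV_def E1_def E2_def by linarith
qed

lemma prob_error_gt_eventually_less:
  assumes c: "c > 0" and r: "r > 0"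
  shows "eventually (\<lambda>n. prob {\<omega>\<in>space M. \<not> estimation_error n \<omega> \<le> c * (1 / sqrt (real n)) powr rate} < r)
           sequentially"
proof -
  define T where "T = 4 * weighted_var_sum / r + 1"
  have T: "T > 0" using weighted_var_sum_nonneg r by (simp add: T_def add_nonneg_pos)
  have var_T: "weighted_var_sum / T \<le> r / 4"
    using r T by (simp add: T_def field_simps)
  define lam where "lam = (c\<^sup>2 * c1 / (112 * T)) powr (1 / bexp)"
  have lam: "lam > 0" "lam powr bexp = c\<^sup>2 * c1 / (112 * T)"
    using c \<sigma>_rate(1) T bexp_pos by (simp_all add: lam_def powr_powr)
  define Kc where "Kc = (16 * C1 powr (1 + \<nu>) * ((norm \<xi>)\<^sup>2 + 1) / trunc_var) powr (1 / aexp)"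
  have Kc: "Kc > 0" "Kc powr aexp = 16 * C1 powr (1 + \<nu>) * ((norm \<xi>)\<^sup>2 + 1) / trunc_var"
    using C1_pos trunc_var_pos aexp_pos add_nonneg_pos[OF zero_le_power2 zero_less_one, of "norm \<xi>"]
    by (simp_all add: Kc_def powr_powr)
  define k0 where "k0 n = nat \<lceil>Kc * real n powr (1 / aexp)\<rceil>" for n
  define G where "G = 4 * C2 / c1 * zeta_sum * (2 * Kc) powr (1 + q - p + \<epsilon> / 2) / c\<^sup>2"
  have "(\<lambda>n. weighted_var_tail (k0 n)) \<longlonglongrightarrow> 0"
    unfolding k0_def using aexp_pos
    by (intro filterlim_compose[OF weighted_var_tail_tendsto_0 filterlim_nat_ceiling_const_mult_powr[OF Kc(1)]])
       auto
  then have "(\<lambda>n. 16 / trunc_var * weighted_var_tail (k0 n)) \<longlonglongrightarrow> 0"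
    by (rule tendsto_mult_right_zero)
  moreover have "(\<lambda>n. G * real n powr (- \<epsilon> / (2 * aexp))) \<longlonglongrightarrow> 0"
    using \<epsilon> aexp_pos
    by (intro tendsto_mult_right_zero tendsto_neg_powr[OF _ filterlim_real_sequentially]) simp
  ultimately have "(\<lambda>n. 16 * weighted_var_tail (k0 n) / trunc_var + G * real n powr (- \<epsilon> / (2 * aexp))
      + 4 / trunc_var\<^sup>2 / real n + 4 * noise_var 1 / trunc_var / real n) \<longlonglongrightarrow> 0 + 0 + 0 + 0"
    by (intro tendsto_add lim_const_over_n) simp_all
  then have ev_small: "eventually (\<lambda>n. 16 * weighted_var_tail (k0 n) / trunc_var
      + G * real n powr (- \<epsilon> / (2 * aexp)) + 4 / (real n * trunc_var\<^sup>2)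
      + 4 * noise_var 1 / (real n * trunc_var) < r / 2) sequentially"
    using r by (auto dest!: order_tendstoD(2)[of _ _ _ "r / 2"] elim!: eventually_mono simp: field_simps)
  have "(\<lambda>n. C1 powr \<nu> * lam powr (- q * \<nu>) * xi_tail (nat \<lfloor>lam * real n powr (1 / aexp)\<rfloor>))
      \<longlonglongrightarrow> C1 powr \<nu> * lam powr (- q * \<nu>) * 0"
    using lam(1) aexp_pos
    by (intro tendsto_mult tendsto_const
        filterlim_compose[OF xi_tail_tendsto_0 filterlim_nat_floor_const_mult_powr]) auto
  then have "eventually (\<lambda>n. C1 powr \<nu> * lam powr (- q * \<nu>)
      * xi_tail (nat \<lfloor>lam * real n powr (1 / aexp)\<rfloor>) < c\<^sup>2 / 8) sequentially"
    using c by (intro order_tendstoD(2)) auto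
  then have ev_xi: "eventually (\<lambda>n. C1 powr \<nu> * lam powr (- q * \<nu>)
      * xi_tail (nat \<lfloor>lam * real n powr (1 / aexp)\<rfloor>) \<le> c\<^sup>2 / 8) sequentially"
    by (rule eventually_mono) simp
  have ev_K: "eventually (\<lambda>n. 1 \<le> Kc * real n powr (1 / aexp)) sequentially"
    using aexp_pos by (intro eventually_le_const_mult_powr[OF Kc(1)]) auto
  from ev_small ev_xi ev_K eventually_ge_at_top[of 2] show ?thesis
  proof eventually_elim
    case (elim n)
    note k0 = nat_ceiling_root_bounds[OF aexp_pos elim(3), folded k0_def, unfolded Kc(2)]
    have "16 * real n * C1 powr (1 + \<nu>) * ((norm \<xi>)\<^sup>2 + 1) / trunc_var \<le> real (k0 n) powr aexp"
      using k0(3) by (simp add: field_simps)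
    from prob_error_gt_le[OF elim(4) T c lam elim(2) Kc(1) k0(1,2) this]
    show ?case using var_T elim(1) unfolding G_def by linarith
  qed
qed

lemma prob_error_le_tendsto_1:
  assumes c: "c > 0"
  shows "(\<lambda>n. prob {\<omega>\<in>space M. estimation_error n \<omega> \<le> c * (1 / sqrt (real n)) powr rate}) \<longlonglongrightarrow> 1"
proof (rule tendstoI)
  fix r :: real assume "r > 0"
  from prob_error_gt_eventually_less[OF c this]
  show "eventually (\<lambda>n. dist (prob {\<omega>\<in>space M. estimation_error n \<omega> \<le> c * (1 / sqrt (real n)) powr rate}) 1 < r)
      sequentially"
  proof eventually_elim
    case (elim n)
    let ?A = "{\<omega>\<in>space M. estimation_error n \<omega> \<le> c * (1 / sqrt (real n)) powr rate}"
    have "?A \<in> sets M" by measurable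
    then have "prob {\<omega>\<in>space M. \<not> estimation_error n \<omega> \<le> c * (1 / sqrt (real n)) powr rate}
        = 1 - prob ?A"
      by (subst prob_compl[symmetric]) (auto intro: arg_cong[where f=prob])
    then show ?case using elim by (simp add: dist_real_def)
  qed
qed

end

theorem theorem2:
  fixes K :: "'x::{real_inner, banach, second_countable_topology} \<Rightarrow> 'y::{real_inner, banach, second_countable_topology}"
    and \<sigma> :: "nat \<Rightarrow> real" and u :: "nat \<Rightarrow> 'y" and v :: "nat \<Rightarrow> 'x"
    and M :: "'a measure" and Y :: "nat \<Rightarrow> 'a \<Rightarrow> 'y"
    and x_hat :: 'x and y_hat :: 'y
    and q p \<epsilon> \<nu> \<rho> :: real
  assumes K_lin: "bounded_linear K"
    and K_compact: "compact (closure (K ` cball 0 1))"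
    and K_dense: "closure (range K) = UNIV"
    and u_on: "\<And>i j. i \<ge> 1 \<Longrightarrow> j \<ge> 1 \<Longrightarrow> u i \<bullet> u j = (if i = j then 1 else 0)"
    and u_basis: "closure (span (u ` {1..})) = UNIV"
    and v_on: "\<And>i j. i \<ge> 1 \<Longrightarrow> j \<ge> 1 \<Longrightarrow> v i \<bullet> v j = (if i = j then 1 else 0)"
    and v_basis: "closure (span (v ` {1..})) = {x. \<forall>z. K z = 0 \<longrightarrow> x \<bullet> z = 0}"
    and \<sigma>_pos: "\<And>j. j \<ge> 1 \<Longrightarrow> \<sigma> j > 0"
    and \<sigma>_mono: "\<And>j. j \<ge> 1 \<Longrightarrow> \<sigma> (Suc j) \<le> \<sigma> j"
    and \<sigma>_lim: "\<sigma> \<longlonglongrightarrow> 0"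
    and svd: "\<And>j. j \<ge> 1 \<Longrightarrow> K (v j) = \<sigma> j *\<^sub>R u j"
    and y_hat: "y_hat = K x_hat"
    and M: "prob_space M"
    and Y_rv: "\<And>i. i \<ge> 1 \<Longrightarrow> Y i \<in> borel_measurable M"
    and Y_indep: "prob_space.indep_vars M (\<lambda>_. borel) Y {1..}"
    and Y_id: "\<And>i. i \<ge> 1 \<Longrightarrow> distr M borel (Y i) = distr M borel (Y 1)"
    and Y_int: "integrable M (Y 1)"
    and Y_mean: "prob_space.expectation M (Y 1) = y_hat"
    and Y_var: "integrable M (\<lambda>\<omega>. (norm (Y 1 \<omega> - y_hat))\<^sup>2)"
    and qp: "q > 0" "p > 1" "q > p - 1"
    and \<sigma>_rate: "asymp_equiv_pos (\<lambda>j. (\<sigma> j)\<^sup>2) (\<lambda>j. real j powr (- q))"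
    and Y_rate: "asymp_equiv_pos (\<lambda>j. prob_space.expectation M (\<lambda>\<omega>. ((Y 1 \<omega> - y_hat) \<bullet> u j)\<^sup>2))
                                  (\<lambda>j. real j powr (- p))"
    and \<epsilon>: "\<epsilon> > 0" "p > 1 + \<epsilon>"
    and \<nu>\<rho>: "\<nu> > 0" "\<rho> > 0"
    and source: "\<exists>\<xi>. norm \<xi> \<le> \<rho> \<and>
                   ((\<lambda>j. (\<sigma> j powr \<nu> * (\<xi> \<bullet> v j)) *\<^sub>R v j) has_sum x_hat) {1..}"
  shows "\<exists>L>0. (\<lambda>n. prob_space.prob M
            {\<omega> \<in> space M.
               norm (xbar \<sigma> u v (ybar Y n \<omega>)
                       (kstop (\<lambda>j. real j powr ((p - 1 - \<epsilon>) / 2)) u Y n \<omega>) - x_hat)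
               \<le> L * \<rho> powr (1 / (1 + q / (q + 1 + \<epsilon> - p) * \<nu>))
                   * (1 / sqrt (real n)) powr ((q / (q + 1 + \<epsilon> - p) * \<nu>)
                                               / (q / (q + 1 + \<epsilon> - p) * \<nu> + 1))})
          \<longlonglongrightarrow> 1"
proof -
  obtain \<xi> where \<xi>: "((\<lambda>j. (\<sigma> j powr \<nu> * (\<xi> \<bullet> v j)) *\<^sub>R v j) has_sum x_hat) {1..}"
    using source by blast
  obtain c1 C1 where c1: "0 < c1"
    "\<forall>j\<ge>1. c1 * real j powr (- q) \<le> (\<sigma> j)\<^sup>2 \<and> (\<sigma> j)\<^sup>2 \<le> C1 * real j powr (- q)"
    using \<sigma>_rate unfolding asymp_equiv_pos_def by blast
  obtain c2 C2 where c2: "0 < c2"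
    "\<forall>j\<ge>1. c2 * real j powr (- p) \<le> prob_space.expectation M (\<lambda>\<omega>. ((Y 1 \<omega> - y_hat) \<bullet> u j)\<^sup>2)
         \<and> prob_space.expectation M (\<lambda>\<omega>. ((Y 1 \<omega> - y_hat) \<bullet> u j)\<^sup>2) \<le> C2 * real j powr (- p)"
    using Y_rate unfolding asymp_equiv_pos_def by blast
  interpret discrepancy_setting K \<sigma> u v M Y x_hat y_hat q p \<epsilon> \<nu> \<xi> c1 C1 c2 C2
    by (rule discrepancy_setting.intro) (use assms \<xi> c1 c2 in blast)+
  have "(q / (q + 1 + \<epsilon> - p) * \<nu>) / (q / (q + 1 + \<epsilon> - p) * \<nu> + 1) = rate"
    using rate_eq_nu' by (simp add: bexp_def)
  then show ?thesis
    using prob_error_le_tendsto_1[of "\<rho> powr (1 / (1 + q / (q + 1 + \<epsilon> - p) * \<nu>))"] \<nu>\<rho>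
    by (intro exI[of _ 1]) (simp add: estimation_error_def weight_def[abs_def])
qed

end
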